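(* Let $V:S^1\to\mathbb{R}$ be of class $C^{k-1,1}(S^1)$ with $k\ge1$ and let $\phi(\theta)=e^{-V(\theta)}$. Let $\gamma_n>0$ be the leading coefficient of the orthonormal polynomial $p_n$ of degree $n$ with respect to $\phi$ on the unit circle, and let $V_0=\frac{1}{2\pi}\int_{-\pi}^\pi V(\theta)d\theta$. Then there is a constant $K>0$ such that \[ \left|\gamma_n^2e^{-V_0}-1\right|\le K\frac{\log(n)}{n^{2k}} \] for all sufficiently large $n$.
   Context: $C^{k-1,1}(S^1)$: functions on the circle whose periodic extension has $k-1$ Lipschitz continuous derivatives. The orthonormal polynomials $p_n(z)=\gamma_nz^n+\dots$, $\gamma_n>0$, satisfy $\langle p_m,p_n\rangle_\phi=\delta_{mn}$ where $\langle f,g\rangle_\phi=\frac{1}{2\pi}\int_{-\pi}^{\pi}f(e^{i\theta})\overline{g(e^{i\theta})}\phi(\theta)d\theta$. *)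

theory Defs
  imports "HOL-Analysis.Analysis" "HOL-Computational_Algebra.Polynomial"
begin

text \<open>C^{k-1,1}(S^1): a function on the circle, viewed as a 2pi-periodic function
  of the angle theta, whose periodic extension has k-1 derivatives, the (k-1)-th one
  being Lipschitz continuous.\<close>
definition C_lip_circle :: "nat \<Rightarrow> (real \<Rightarrow> real) \<Rightarrow> bool" where
  "C_lip_circle k V \<longleftrightarrow>
     (\<forall>x. V (x + 2 * pi) = V x) \<and>
     (\<exists>D :: nat \<Rightarrow> real \<Rightarrow> real. D 0 = V \<and>
        (\<forall>j < k - 1. \<forall>x. (D j has_real_derivative D (Suc j) x) (at x)) \<and>
        (\<exists>L. \<forall>x y. \<bar>D (k - 1) x - D (k - 1) y\<bar> \<le> L * \<bar>x - y\<bar>))"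

definition circ_inner :: "(real \<Rightarrow> real) \<Rightarrow> complex poly \<Rightarrow> complex poly \<Rightarrow> complex" where
  "circ_inner \<phi> f g =
     complex_of_real (1 / (2 * pi)) *
     integral {-pi..pi} (\<lambda>\<theta>. poly f (cis \<theta>) * cnj (poly g (cis \<theta>)) * complex_of_real (\<phi> \<theta>))"

end

theory Submission
  imports Defs "HOL-Complex_Analysis.Complex_Analysis"
begin

(* Szego's extremal characterisation: 1/gamma_n^2 is the minimum of
   (1/2pi) int |Q(e^{i theta})|^2 phi over monic Q of degree n, equivalently over the
   reversed polynomials q = Q^* of degree at most n with q(0) = 1.  Write
   V = V_0 + 2 Re H_n + u_n with H_n(z) = sum_{j=1..n} Vhat_j z^j.  The C^{k-1,1}
   hypothesis gives sum_j |j|^{2k} |Vhat_j|^2 <= L^2, hence int u_n^2 = O(n^{-2k}),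
   while int u_n = 0.

   Upper bound: for q the reversed normalised p_n, q e^{-H_n} is entire with value 1 at 0,
   so its mean over the circle is 1; AM-GM against |p_n|^2 phi gives
   gamma_n^2 e^{-V_0} <= (1/2pi) int e^{u_n} = 1 + O(n^{-2k}).

   Lower bound: truncating a long Taylor partial sum of e^{H_n} to degree n gives q with
   q e^{-H_n} = 1 + s, int Re s = 0 and int |s|^2 = O(n^{-2k}); the truncation error is
   controlled by the weighted norm (sum_i (1+i)^{2k} |c_i|^2)^{1/2} of the coefficients,
   which is submultiplicative up to a constant.  Expanding |1 + s|^2 e^{-u_n} to second
   order gives e^{V_0} / gamma_n^2 <= 1 + O(n^{-2k}).

   Both errors are O(n^{-2k}). *)

section \<open>Fourier analysis on the circle\<close>

lemma has_vector_derivative_cis_linear: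
  "((\<lambda>\<theta>. cis (c * \<theta>)) has_vector_derivative (\<i> * of_real c * cis (c * \<theta>))) (at \<theta> within S)"
proof -
  have "((\<lambda>\<theta>. cis (c * \<theta>)) has_derivative (\<lambda>t. (c * t) *\<^sub>R (\<i> * cis (c * \<theta>)))) (at \<theta> within S)"
    by (auto intro!: derivative_eq_intros)
  then show ?thesis unfolding has_vector_derivative_def
    by (simp add: scaleR_conv_of_real algebra_simps)
qed

definition cis_mode :: "int \<Rightarrow> real \<Rightarrow> complex" where
  "cis_mode j \<theta> = cis (of_int j * \<theta>)"

lemma cis_mode_pi: "cis_mode j pi = cis_mode j (-pi)"
proof -
  have "cis (of_int j * pi) = cis (of_int j * (-pi)) * cis (2 * pi * of_int j)"
    by (simp add: cis_mult algebra_simps)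
  then show ?thesis unfolding cis_mode_def by simp
qed

lemma has_integral_cis_int:
  fixes m :: int
  shows "((\<lambda>\<theta>. cis (of_int m * \<theta>)) has_integral (if m = 0 then 2*pi else 0)) {-pi..pi}"
proof (cases "m = 0")
  case True
  then show ?thesis using has_integral_const_real[of "1::complex" "-pi" pi]
    by (simp add: scaleR_conv_of_real)
next
  case False
  let ?F = "\<lambda>\<theta>. cis (of_int m * \<theta>) / (\<i> * of_int m)"
  have "((\<lambda>\<theta>. cis (of_int m * \<theta>)) has_integral (?F pi - ?F (-pi))) {-pi..pi}"
  proof (rule fundamental_theorem_of_calculus)
    fix x assume "x \<in> {-pi..pi}"
    have "(?F has_vector_derivative ((\<i> * of_real (of_int m) * cis (of_int m * x)) / (\<i> * of_int m))) (at x within {-pi..pi})"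
      using has_vector_derivative_cis_linear[of "of_int m" x "{-pi..pi}"]
      by (intro has_vector_derivative_divide) auto
    then show "(?F has_vector_derivative cis (of_int m * x)) (at x within {-pi..pi})"
      using False by simp
  qed simp
  moreover have "cis (of_int m * pi) = cis (of_int m * (-pi))"
    using cis_mode_pi[of m] unfolding cis_mode_def .
  ultimately show ?thesis using False by simp
qed

lemma integral_cis_int:
  fixes m :: int
  shows "integral {-pi..pi} (\<lambda>\<theta>. cis (of_int m * \<theta>)) = (if m = 0 then 2*pi else 0)"
  using has_integral_cis_int integral_unique by blast

definition l2_inner :: "(real \<Rightarrow> complex) \<Rightarrow> (real \<Rightarrow> complex) \<Rightarrow> complex" where
  "l2_inner f g = integral {-pi..pi} (\<lambda>\<theta>. f \<theta> * cnj (g \<theta>))"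

abbreviation cont_pi :: "(real \<Rightarrow> complex) \<Rightarrow> bool" where
  "cont_pi f \<equiv> continuous_on {-pi..pi} f"

lemma cont_pi_cis_mode [simp, intro]: "cont_pi (cis_mode j)"
  unfolding cis_mode_def by (intro continuous_intros)

lemma cis_mode_mult: "cis_mode i \<theta> * cis_mode j \<theta> = cis_mode (i + j) \<theta>"
  unfolding cis_mode_def by (simp add: cis_mult algebra_simps)

lemma cis_mode_0 [simp]: "cis_mode 0 \<theta> = 1"
  unfolding cis_mode_def by simp

lemma cis_mode_periodic: "cis_mode j (t + 2*pi) = cis_mode j t"
proof -
  have "cis (of_int j * (t + 2*pi)) = cis (of_int j * t) * cis (2 * pi * of_int j)"
    by (simp add: cis_mult algebra_simps)
  then show ?thesis unfolding cis_mode_def by simp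
qed

lemma cnj_cis_mode: "cnj (cis_mode j \<theta>) = cis ((- of_int j) * \<theta>)"
  unfolding cis_mode_def by (simp add: cis_cnj)

lemma continuous_on_cis_mode [continuous_intros]: "continuous_on UNIV (cis_mode j)"
  unfolding cis_mode_def by (intro continuous_intros)

lemma integrable_l2_inner_integrand: "cont_pi f \<Longrightarrow> cont_pi g \<Longrightarrow> (\<lambda>\<theta>. f \<theta> * cnj (g \<theta>)) integrable_on {-pi..pi}"
  by (intro integrable_continuous_interval continuous_intros)

lemma l2_inner_add_left: "cont_pi f \<Longrightarrow> cont_pi g \<Longrightarrow> cont_pi h \<Longrightarrow> l2_inner (\<lambda>\<theta>. f \<theta> + g \<theta>) h = l2_inner f h + l2_inner g h"
  unfolding l2_inner_def by (simp add: distrib_right integral_add integrable_l2_inner_integrand)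

lemma l2_inner_diff_left: "cont_pi f \<Longrightarrow> cont_pi g \<Longrightarrow> cont_pi h \<Longrightarrow> l2_inner (\<lambda>\<theta>. f \<theta> - g \<theta>) h = l2_inner f h - l2_inner g h"
  unfolding l2_inner_def by (simp add: left_diff_distrib integral_diff integrable_l2_inner_integrand)

lemma l2_inner_mult_left: "l2_inner (\<lambda>\<theta>. c * f \<theta>) h = c * l2_inner f h"
  unfolding l2_inner_def mult.assoc by (rule integral_mult_right)

lemma l2_inner_commute: "l2_inner g f = cnj (l2_inner f g)"
  unfolding l2_inner_def integral_cnj by (simp add: mult.commute)

lemma l2_inner_add_right: "cont_pi f \<Longrightarrow> cont_pi g \<Longrightarrow> cont_pi h \<Longrightarrow> l2_inner h (\<lambda>\<theta>. f \<theta> + g \<theta>) = l2_inner h f + l2_inner h g"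
proof -
  assume a: "cont_pi f" "cont_pi g" "cont_pi h"
  have "l2_inner h (\<lambda>\<theta>. f \<theta> + g \<theta>) = cnj (l2_inner (\<lambda>\<theta>. f \<theta> + g \<theta>) h)" by (rule l2_inner_commute)
  also have "\<dots> = cnj (l2_inner f h + l2_inner g h)" using a by (simp add: l2_inner_add_left)
  finally show ?thesis by (simp add: l2_inner_commute[of h f] l2_inner_commute[of h g])
qed

lemma l2_inner_mult_right: "l2_inner h (\<lambda>\<theta>. c * f \<theta>) = cnj c * l2_inner h f"
  using l2_inner_commute[of h "\<lambda>\<theta>. c * f \<theta>"] by (simp add: l2_inner_mult_left l2_inner_commute[of h f])

lemma l2_inner_sum_left:
  assumes "finite J" "\<And>j. j \<in> J \<Longrightarrow> cont_pi (f j)" "cont_pi h"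
  shows "l2_inner (\<lambda>\<theta>. \<Sum>j\<in>J. f j \<theta>) h = (\<Sum>j\<in>J. l2_inner (f j) h)"
proof -
  have "l2_inner (\<lambda>\<theta>. \<Sum>j\<in>J. f j \<theta>) h = integral {-pi..pi} (\<lambda>\<theta>. \<Sum>j\<in>J. f j \<theta> * cnj (h \<theta>))"
    unfolding l2_inner_def by (simp add: sum_distrib_right)
  also have "\<dots> = (\<Sum>j\<in>J. l2_inner (f j) h)"
    unfolding l2_inner_def using assms by (intro integral_sum) (auto intro: integrable_l2_inner_integrand)
  finally show ?thesis .
qed

lemma l2_inner_sum_right:
  assumes "finite J" "\<And>j. j \<in> J \<Longrightarrow> cont_pi (f j)" "cont_pi h"
  shows "l2_inner h (\<lambda>\<theta>. \<Sum>j\<in>J. f j \<theta>) = (\<Sum>j\<in>J. l2_inner h (f j))"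
proof -
  have "l2_inner h (\<lambda>\<theta>. \<Sum>j\<in>J. f j \<theta>) = cnj (l2_inner (\<lambda>\<theta>. \<Sum>j\<in>J. f j \<theta>) h)" by (rule l2_inner_commute)
  also have "\<dots> = (\<Sum>j\<in>J. cnj (l2_inner (f j) h))" using l2_inner_sum_left[OF assms] by (simp add: cnj_sum)
  also have "\<dots> = (\<Sum>j\<in>J. l2_inner h (f j))" by (simp add: l2_inner_commute[of h])
  finally show ?thesis .
qed

lemma l2_inner_cis_mode: "l2_inner (cis_mode i) (cis_mode j) = (if i = j then 2 * pi else 0)"
proof -
  have e: "(\<lambda>\<theta>. cis_mode i \<theta> * cnj (cis_mode j \<theta>)) = (\<lambda>\<theta>. cis (of_int (i - j) * \<theta>))"
    by (rule ext) (simp add: cis_mode_def cis_cnj cis_mult algebra_simps)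
  show ?thesis unfolding l2_inner_def e integral_cis_int by simp
qed

lemma l2_inner_self_integral: "cont_pi f \<Longrightarrow> l2_inner f f = of_real (integral {-pi..pi} (\<lambda>\<theta>. (cmod (f \<theta>))\<^sup>2))"
proof -
  assume a: "cont_pi f"
  have "l2_inner f f = integral {-pi..pi} (\<lambda>\<theta>. of_real ((cmod (f \<theta>))\<^sup>2))"
    unfolding l2_inner_def by (simp only: complex_norm_square)
  also have "\<dots> = of_real (integral {-pi..pi} (\<lambda>\<theta>. (cmod (f \<theta>))\<^sup>2))"
    using a by (intro integral_unique has_integral_of_real integrable_integral integrable_continuous_interval continuous_intros)
  finally show ?thesis .
qed

definition trig_poly :: "int set \<Rightarrow> (int \<Rightarrow> complex) \<Rightarrow> real \<Rightarrow> complex" where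
  "trig_poly J c \<theta> = (\<Sum>j\<in>J. c j * cis_mode j \<theta>)"

definition fourier_coeff :: "(real \<Rightarrow> complex) \<Rightarrow> int \<Rightarrow> complex" where
  "fourier_coeff f j = l2_inner f (cis_mode j) / (2 * pi)"

definition l2_sq :: "(real \<Rightarrow> complex) \<Rightarrow> real" where
  "l2_sq f = Re (l2_inner f f)"

lemma cont_pi_trig_poly [simp, intro]: "cont_pi (trig_poly J c)"
  unfolding trig_poly_def cis_mode_def by (intro continuous_intros)

lemma l2_inner_trig_poly_cis_mode:
  assumes "finite J"
  shows "l2_inner (trig_poly J c) (cis_mode i) = (if i \<in> J then of_real (2 * pi) * c i else 0)"
proof -
  have "l2_inner (trig_poly J c) (cis_mode i) = (\<Sum>j\<in>J. l2_inner (\<lambda>\<theta>. c j * cis_mode j \<theta>) (cis_mode i))"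
    unfolding trig_poly_def using assms by (intro l2_inner_sum_left) (auto intro: continuous_intros)
  also have "\<dots> = (\<Sum>j\<in>J. c j * (if j = i then of_real (2 * pi) else 0))"
    by (intro sum.cong refl) (simp add: l2_inner_mult_left l2_inner_cis_mode)
  also have "\<dots> = (if i \<in> J then of_real (2 * pi) * c i else 0)"
    using assms by (simp add: if_distrib[of "\<lambda>x. c _ * x"] sum.delta' cong: if_cong)
  finally show ?thesis .
qed

lemma l2_inner_trig_poly_right:
  assumes "finite J" "cont_pi f"
  shows "l2_inner f (trig_poly J d) = (\<Sum>j\<in>J. cnj (d j) * l2_inner f (cis_mode j))"
proof -
  have "l2_inner f (trig_poly J d) = (\<Sum>j\<in>J. l2_inner f (\<lambda>\<theta>. d j * cis_mode j \<theta>))"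
    unfolding trig_poly_def using assms by (intro l2_inner_sum_right) (auto intro: continuous_intros)
  also have "\<dots> = (\<Sum>j\<in>J. cnj (d j) * l2_inner f (cis_mode j))"
    using assms by (intro sum.cong refl) (simp add: l2_inner_mult_right)
  finally show ?thesis .
qed

lemma l2_inner_trig_poly_trig_poly:
  assumes "finite J"
  shows "l2_inner (trig_poly J c) (trig_poly J d) = of_real (2 * pi) * (\<Sum>j\<in>J. c j * cnj (d j))"
  using assms by (simp add: l2_inner_trig_poly_right l2_inner_trig_poly_cis_mode sum_distrib_left algebra_simps)

lemma l2_sq_eq_integral: "cont_pi f \<Longrightarrow> l2_sq f = integral {-pi..pi} (\<lambda>\<theta>. (cmod (f \<theta>))\<^sup>2)"
  unfolding l2_sq_def by (simp add: l2_inner_self_integral)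

lemma l2_sq_nonneg: "cont_pi f \<Longrightarrow> l2_sq f \<ge> 0"
  by (simp add: l2_sq_eq_integral integral_nonneg integrable_continuous_interval continuous_intros)

lemma l2_sq_trig_poly:
  assumes "finite J"
  shows "l2_sq (trig_poly J c) = 2 * pi * (\<Sum>j\<in>J. (cmod (c j))\<^sup>2)"
proof -
  have "l2_inner (trig_poly J c) (trig_poly J c) = of_real (2 * pi * (\<Sum>j\<in>J. (cmod (c j))\<^sup>2))"
    using assms by (simp only: l2_inner_trig_poly_trig_poly complex_norm_square[symmetric] of_real_sum of_real_mult)
  then show ?thesis unfolding l2_sq_def by simp
qed

lemma l2_sq_add_orthogonal:
  assumes "cont_pi a" "cont_pi b" "l2_inner a b = 0"
  shows "l2_sq (\<lambda>\<theta>. a \<theta> + b \<theta>) = l2_sq a + l2_sq b"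
proof -
  have ba: "l2_inner b a = 0" using assms(3) by (simp add: l2_inner_commute[of b a])
  have "l2_inner (\<lambda>\<theta>. a \<theta> + b \<theta>) (\<lambda>\<theta>. a \<theta> + b \<theta>) = l2_inner a a + l2_inner a b + (l2_inner b a + l2_inner b b)"
    using assms(1,2) by (simp add: l2_inner_add_left l2_inner_add_right continuous_intros)
  then show ?thesis unfolding l2_sq_def using assms(3) ba by simp
qed

lemma l2_inner_fourier_remainder_cis_mode:
  assumes "cont_pi f" "finite J" "i \<in> J"
  shows "l2_inner (\<lambda>\<theta>. f \<theta> - trig_poly J (fourier_coeff f) \<theta>) (cis_mode i) = 0"
  using assms by (simp add: l2_inner_diff_left l2_inner_trig_poly_cis_mode fourier_coeff_def)

lemma l2_inner_fourier_remainder_trig_poly: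
  assumes "cont_pi f" "finite J"
  shows "l2_inner (\<lambda>\<theta>. f \<theta> - trig_poly J (fourier_coeff f) \<theta>) (trig_poly J d) = 0"
  using assms by (simp add: l2_inner_trig_poly_right l2_inner_fourier_remainder_cis_mode continuous_intros)

lemma trig_poly_diff: "trig_poly J c \<theta> - trig_poly J d \<theta> = trig_poly J (\<lambda>j. c j - d j) \<theta>"
  unfolding trig_poly_def by (simp add: sum_subtractf left_diff_distrib)

lemma l2_sq_remainder_best_approx:
  assumes "cont_pi f" "finite J"
  shows "l2_sq (\<lambda>\<theta>. f \<theta> - trig_poly J d \<theta>)
        = l2_sq (\<lambda>\<theta>. f \<theta> - trig_poly J (fourier_coeff f) \<theta>) + 2 * pi * (\<Sum>j\<in>J. (cmod (fourier_coeff f j - d j))\<^sup>2)"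
proof -
  have e: "(\<lambda>\<theta>. f \<theta> - trig_poly J d \<theta>) = (\<lambda>\<theta>. (f \<theta> - trig_poly J (fourier_coeff f) \<theta>) + trig_poly J (\<lambda>j. fourier_coeff f j - d j) \<theta>)"
    by (rule ext) (simp add: trig_poly_diff[symmetric])
  have "l2_sq (\<lambda>\<theta>. (f \<theta> - trig_poly J (fourier_coeff f) \<theta>) + trig_poly J (\<lambda>j. fourier_coeff f j - d j) \<theta>)
      = l2_sq (\<lambda>\<theta>. f \<theta> - trig_poly J (fourier_coeff f) \<theta>) + l2_sq (trig_poly J (\<lambda>j. fourier_coeff f j - d j))"
    using assms by (intro l2_sq_add_orthogonal[where b = "trig_poly J (\<lambda>j. fourier_coeff f j - d j)", simplified])
       (auto intro: continuous_intros l2_inner_fourier_remainder_trig_poly)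
  then show ?thesis using e assms by (simp add: l2_sq_trig_poly)
qed

lemma bessel_identity:
  assumes "cont_pi f" "finite J"
  shows "l2_sq f = l2_sq (\<lambda>\<theta>. f \<theta> - trig_poly J (fourier_coeff f) \<theta>) + 2 * pi * (\<Sum>j\<in>J. (cmod (fourier_coeff f j))\<^sup>2)"
  using l2_sq_remainder_best_approx[OF assms, of "\<lambda>_. 0"] by (simp add: trig_poly_def)

lemma bessel_inequality:
  assumes "cont_pi f" "finite J"
  shows "2 * pi * (\<Sum>j\<in>J. (cmod (fourier_coeff f j))\<^sup>2) \<le> l2_sq f"
  using bessel_identity[OF assms] l2_sq_nonneg[of "\<lambda>\<theta>. f \<theta> - trig_poly J (fourier_coeff f) \<theta>"] assms
  by (simp add: continuous_intros)

definition is_trig_poly :: "(real \<Rightarrow> complex) \<Rightarrow> bool" where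
  "is_trig_poly h \<longleftrightarrow> (\<exists>J d. finite J \<and> (\<forall>\<theta>. h \<theta> = trig_poly J d \<theta>))"

lemma trig_poly_extend:
  assumes "finite K" "J \<subseteq> K"
  shows "trig_poly J d \<theta> = trig_poly K (\<lambda>j. if j \<in> J then d j else 0) \<theta>"
proof -
  have "trig_poly K (\<lambda>j. if j \<in> J then d j else 0) \<theta> = (\<Sum>j\<in>K. if j \<in> J then d j * cis_mode j \<theta> else 0)"
    unfolding trig_poly_def by (rule sum.cong) auto
  also have "\<dots> = (\<Sum>j\<in>K \<inter> J. d j * cis_mode j \<theta>)"
    using assms by (simp add: sum.inter_restrict)
  also have "K \<inter> J = J" using assms by auto
  finally show ?thesis unfolding trig_poly_def by simp
qed

lemma is_trig_poly_const: "is_trig_poly (\<lambda>\<theta>. c)"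
  unfolding is_trig_poly_def
  by (rule exI[of _ "{0}"], rule exI[of _ "\<lambda>_. c"]) (simp add: trig_poly_def)

lemma is_trig_poly_add:
  assumes "is_trig_poly f" "is_trig_poly g"
  shows "is_trig_poly (\<lambda>\<theta>. f \<theta> + g \<theta>)"
proof -
  obtain J c where J: "finite J" "\<And>\<theta>. f \<theta> = trig_poly J c \<theta>" using assms(1) unfolding is_trig_poly_def by blast
  obtain K d where K: "finite K" "\<And>\<theta>. g \<theta> = trig_poly K d \<theta>" using assms(2) unfolding is_trig_poly_def by blast
  let ?c = "\<lambda>j. if j \<in> J then c j else 0"
  let ?d = "\<lambda>j. if j \<in> K then d j else 0"
  have "f \<theta> + g \<theta> = trig_poly (J \<union> K) (\<lambda>j. ?c j + ?d j) \<theta>" for \<theta>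
  proof -
    have "f \<theta> + g \<theta> = trig_poly (J \<union> K) ?c \<theta> + trig_poly (J \<union> K) ?d \<theta>"
      using J K by (simp add: trig_poly_extend[of "J \<union> K" J] trig_poly_extend[of "J \<union> K" K])
    also have "\<dots> = trig_poly (J \<union> K) (\<lambda>j. ?c j + ?d j) \<theta>"
      unfolding trig_poly_def by (simp add: sum.distrib distrib_right)
    finally show ?thesis .
  qed
  then show ?thesis unfolding is_trig_poly_def using J K by blast
qed

lemma is_trig_poly_mult:
  assumes "is_trig_poly f" "is_trig_poly g"
  shows "is_trig_poly (\<lambda>\<theta>. f \<theta> * g \<theta>)"
proof -
  obtain J c where J: "finite J" "\<And>\<theta>. f \<theta> = trig_poly J c \<theta>" using assms(1) unfolding is_trig_poly_def by blast
  obtain K d where K: "finite K" "\<And>\<theta>. g \<theta> = trig_poly K d \<theta>" using assms(2) unfolding is_trig_poly_def by blast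
  define s where "s = (\<lambda>p::int\<times>int. fst p + snd p)"
  define L where "L = s ` (J \<times> K)"
  define e where "e = (\<lambda>m. \<Sum>p\<in>{p\<in>J \<times> K. s p = m}. c (fst p) * d (snd p))"
  have fL: "finite L" unfolding L_def using J K by simp
  have "f \<theta> * g \<theta> = trig_poly L e \<theta>" for \<theta>
  proof -
    have "f \<theta> * g \<theta> = (\<Sum>i\<in>J. \<Sum>j\<in>K. (c i * cis_mode i \<theta>) * (d j * cis_mode j \<theta>))"
      using J K unfolding trig_poly_def by (simp add: sum_product)
    also have "\<dots> = (\<Sum>p\<in>J \<times> K. c (fst p) * d (snd p) * cis_mode (s p) \<theta>)"
      unfolding sum.cartesian_product s_def
      by (intro sum.cong refl) (auto simp: cis_mode_mult[symmetric] algebra_simps)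
    also have "\<dots> = (\<Sum>m\<in>L. \<Sum>p\<in>{p\<in>J \<times> K. s p = m}. c (fst p) * d (snd p) * cis_mode (s p) \<theta>)"
      using J K fL by (intro sum.group[symmetric]) (auto simp: L_def)
    also have "\<dots> = (\<Sum>m\<in>L. e m * cis_mode m \<theta>)"
      unfolding e_def sum_distrib_right by (intro sum.cong refl) auto
    finally show ?thesis unfolding trig_poly_def .
  qed
  then show ?thesis unfolding is_trig_poly_def using fL by blast
qed

lemma is_trig_poly_cos: "is_trig_poly (\<lambda>\<theta>. of_real (cos \<theta>))"
proof -
  have "of_real (cos \<theta>) = trig_poly {-1, 1} (\<lambda>_. 1/2) \<theta>" for \<theta>
    unfolding trig_poly_def cis_mode_def by (simp add: cis.ctr complex_eq_iff)
  then show ?thesis unfolding is_trig_poly_def by (intro exI[of _ "{-1,1}"] exI[of _ "\<lambda>_. 1/2"]) auto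
qed

lemma is_trig_poly_sin: "is_trig_poly (\<lambda>\<theta>. of_real (sin \<theta>))"
proof -
  have "of_real (sin \<theta>) = trig_poly {-1, 1} (\<lambda>j. - \<i> * of_int j / 2) \<theta>" for \<theta>
    unfolding trig_poly_def cis_mode_def by (simp add: cis.ctr complex_eq_iff)
  then show ?thesis unfolding is_trig_poly_def by (intro exI[of _ "{-1,1}"] exI[of _ "\<lambda>j. - \<i> * of_int j / 2"]) auto
qed

lemma is_trig_poly_real_polynomial_function_cis:
  assumes "real_polynomial_function g"
  shows "is_trig_poly (\<lambda>\<theta>. complex_of_real (g (cis \<theta>)))"
  using assms
proof (induction rule: real_polynomial_function.induct)
  case (linear f)
  have "f (cis \<theta>) = cos \<theta> * f 1 + sin \<theta> * f \<i>" for \<theta>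
  proof -
    have lin: "linear f" using linear by (rule bounded_linear.linear)
    have "cis \<theta> = cos \<theta> *\<^sub>R 1 + sin \<theta> *\<^sub>R \<i>" by (simp add: complex_eq_iff)
    then have "f (cis \<theta>) = cos \<theta> *\<^sub>R f 1 + sin \<theta> *\<^sub>R f \<i>"
      by (simp only: linear_add[OF lin] linear_scale[OF lin])
    then show ?thesis by simp
  qed
  then have "(\<lambda>\<theta>. complex_of_real (f (cis \<theta>))) =
     (\<lambda>\<theta>. of_real (cos \<theta>) * of_real (f 1) + of_real (sin \<theta>) * of_real (f \<i>))" by auto
  then show ?case
    by (simp add: is_trig_poly_add is_trig_poly_mult is_trig_poly_cos is_trig_poly_sin is_trig_poly_const)
next
  case (const c)
  then show ?case by (simp add: is_trig_poly_const)
next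
  case (add f g)
  then show ?case using is_trig_poly_add by simp
next
  case (mult f g)
  then show ?case using is_trig_poly_mult by simp
qed

lemma periodic_Arg_uminus:
  fixes V :: "real \<Rightarrow> real"
  assumes per: "\<forall>x. V (x + 2*pi) = V x" and "z \<noteq> 0"
  shows "V (Arg z) = V (Arg (-z) + pi)"
proof (cases "Arg z \<le> 0")
  case True
  then have "Arg (-z) + pi = Arg z + 2 * pi" using Arg_minus[OF assms(2)] by simp
  then show ?thesis using per[rule_format, of "Arg z"] by (simp add: add.commute)
next
  case False
  then show ?thesis using Arg_minus[OF assms(2)] by simp
qed

lemma continuous_on_sphere_periodic_Arg:
  fixes V :: "real \<Rightarrow> real"
  assumes cont: "continuous_on UNIV V" and per: "\<forall>x. V (x + 2*pi) = V x"
  shows "continuous_on (sphere 0 1) (\<lambda>z. V (Arg z))"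
proof -
  have isCont_V: "isCont V x" for x using cont by (simp add: continuous_on_eq_continuous_at)
  show ?thesis unfolding continuous_on_eq_continuous_within
  proof
    fix z :: complex assume z: "z \<in> sphere 0 1"
    then have z0: "z \<noteq> 0" by auto
    show "continuous (at z within sphere 0 1) (\<lambda>z. V (Arg z))"
    proof (cases "z \<in> \<real>\<^sub>\<le>\<^sub>0")
      case False
      then have "continuous (at z) (\<lambda>z. V (Arg z))"
        using continuous_at_compose[of z Arg V, OF continuous_at_Arg[OF False]] isCont_V
        by (simp add: o_def)
      then show ?thesis using continuous_at_imp_continuous_within by blast
    next
      case True
      have "- z \<notin> \<real>\<^sub>\<le>\<^sub>0"
        using True z0 by (auto simp: complex_nonpos_Reals_iff complex_eq_iff)
      then have c1: "continuous (at (-z)) Arg" by (rule continuous_at_Arg)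
      have "continuous (at z) (\<lambda>w. V (Arg (-w) + pi))"
      proof -
        have "continuous (at z) (\<lambda>w. Arg (-w) + pi)"
          using continuous_at_compose[of z uminus Arg] c1
          by (intro continuous_intros) (auto simp: o_def)
        then show ?thesis
          using continuous_at_compose[of z "\<lambda>w. Arg (-w) + pi" V] isCont_V by (simp add: o_def)
      qed
      then have "continuous (at z within sphere 0 1) (\<lambda>w. V (Arg (-w) + pi))"
        using continuous_at_imp_continuous_within by blast
      then show ?thesis
      proof (rule continuous_transform_within[where \<delta> = 1])
        fix x' :: complex assume "x' \<in> sphere 0 1" "dist x' z < 1"
        then have "x' \<noteq> 0" by auto
        then show "V (Arg (- x') + pi) = V (Arg x')" using periodic_Arg_uminus[OF per] by metis
      qed (use z in auto)
    qed
  qed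
qed

lemma real_polynomial_approx_on_circle:
  fixes F :: "complex \<Rightarrow> real"
  assumes contF: "continuous_on (sphere 0 1) F" and e: "e > 0"
  shows "\<exists>g. real_polynomial_function g \<and> (\<forall>x \<in> sphere 0 1. \<bar>F x - g x\<bar> < e)"
proof (rule Stone_Weierstrass_HOL[OF compact_sphere _ _ _ _ _ contF e])
  show "\<And>f. real_polynomial_function f \<Longrightarrow> continuous_on (sphere 0 1) f"
    by (simp add: continuous_at_imp_continuous_on continuous_real_polymonial_function)
  fix x y :: complex assume "x \<in> sphere 0 1 \<and> y \<in> sphere 0 1 \<and> x \<noteq> y"
  then have "Re x \<noteq> Re y \<or> Im x \<noteq> Im y" by (auto simp: complex_eq_iff)
  then show "\<exists>f::complex\<Rightarrow>real. real_polynomial_function f \<and> f x \<noteq> f y"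
    using real_polynomial_function.intros(1)[OF bounded_linear_Re]
      real_polynomial_function.intros(1)[OF bounded_linear_Im] by blast
qed auto

lemma periodic_Arg_cis:
  fixes V :: "real \<Rightarrow> real"
  assumes per: "\<forall>x. V (x + 2*pi) = V x" and \<theta>: "\<theta> \<in> {-pi..pi}"
  shows "V (Arg (cis \<theta>)) = V \<theta>"
proof (cases "\<theta> = -pi")
  case True
  have "cis (-pi) = -1" by (simp add: complex_eq_iff)
  moreover have "Arg (-1) = pi" using Arg_cis[of pi] by simp
  moreover have "V pi = V (-pi)" using per[rule_format, of "-pi"] by simp
  ultimately show ?thesis using True by simp
next
  case False
  then show ?thesis using \<theta> by (simp add: Arg_cis)
qed

lemma periodic_uniform_approx_trig_poly:
  fixes V :: "real \<Rightarrow> real"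
  assumes cont: "continuous_on UNIV V" and per: "\<forall>x. V (x + 2*pi) = V x" and e: "e > 0"
  shows "\<exists>J d. finite J \<and> (\<forall>\<theta>\<in>{-pi..pi}. cmod (of_real (V \<theta>) - trig_poly J d \<theta>) \<le> e)"
proof -
  obtain g where g: "real_polynomial_function g" "\<forall>x \<in> sphere 0 1. \<bar>V (Arg x) - g x\<bar> < e"
    using real_polynomial_approx_on_circle[OF continuous_on_sphere_periodic_Arg[OF cont per] e] by blast
  obtain J d where Jd: "finite J" "\<And>\<theta>. complex_of_real (g (cis \<theta>)) = trig_poly J d \<theta>"
    using is_trig_poly_real_polynomial_function_cis[OF g(1)] unfolding is_trig_poly_def by blast
  have "cmod (of_real (V \<theta>) - trig_poly J d \<theta>) \<le> e" if "\<theta> \<in> {-pi..pi}" for \<theta>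
  proof -
    have "\<bar>V \<theta> - g (cis \<theta>)\<bar> < e"
      using g(2) periodic_Arg_cis[OF per that] by (metis mem_sphere_0 norm_cis)
    then show ?thesis using Jd(2)[of \<theta>] by (metis less_imp_le norm_of_real of_real_diff)
  qed
  then show ?thesis using Jd(1) by blast
qed

lemma fourier_remainder_l2_small:
  fixes V :: "real \<Rightarrow> real"
  assumes cont: "continuous_on UNIV V" and per: "\<forall>x. V (x + 2*pi) = V x" and e: "e > 0"
  shows "\<exists>M0. \<forall>M\<ge>M0. l2_sq (\<lambda>\<theta>. of_real (V \<theta>) - trig_poly {-M..M} (fourier_coeff (\<lambda>\<theta>. of_real (V \<theta>))) \<theta>) \<le> e"
proof -
  define f where "f = (\<lambda>\<theta>. complex_of_real (V \<theta>))"
  have CCf: "cont_pi f" unfolding f_def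
    by (intro continuous_intros continuous_on_subset[OF cont]) auto
  define e' where "e' = sqrt (e / (2 * pi))"
  have e'0: "e' > 0" unfolding e'_def using e by simp
  have e'2: "2 * pi * e'\<^sup>2 = e" unfolding e'_def using e by simp
  obtain J d where Jd: "finite J" "\<forall>\<theta>\<in>{-pi..pi}. cmod (of_real (V \<theta>) - trig_poly J d \<theta>) \<le> e'"
    using periodic_uniform_approx_trig_poly[OF cont per e'0] by blast
  define M0 where "M0 = (\<Sum>j\<in>J. \<bar>j\<bar>)"
  have "l2_sq (\<lambda>\<theta>. f \<theta> - trig_poly {-M..M} (fourier_coeff f) \<theta>) \<le> e" if M: "M \<ge> M0" for M
  proof -
    have sub: "J \<subseteq> {-M..M}"
    proof
      fix j assume "j \<in> J"
      then have "\<bar>j\<bar> \<le> M0" unfolding M0_def using Jd(1)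
        by (intro member_le_sum) auto
      then show "j \<in> {-M..M}" using M by auto
    qed
    define d' where "d' = (\<lambda>j. if j \<in> J then d j else 0)"
    have tr: "trig_poly J d \<theta> = trig_poly {-M..M} d' \<theta>" for \<theta>
      unfolding d'_def by (rule trig_poly_extend[OF _ sub]) simp
    have "l2_sq (\<lambda>\<theta>. f \<theta> - trig_poly {-M..M} (fourier_coeff f) \<theta>) \<le> l2_sq (\<lambda>\<theta>. f \<theta> - trig_poly {-M..M} d' \<theta>)"
      using l2_sq_remainder_best_approx[OF CCf, of "{-M..M}" d'] by (simp add: sum_nonneg)
    also have "\<dots> = integral {-pi..pi} (\<lambda>\<theta>. (cmod (f \<theta> - trig_poly J d \<theta>))\<^sup>2)"
      using CCf by (subst l2_sq_eq_integral) (auto intro!: continuous_intros simp: tr)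
    also have "\<dots> \<le> integral {-pi..pi} (\<lambda>\<theta>. e'\<^sup>2)"
    proof (rule integral_le)
      show "(\<lambda>\<theta>. (cmod (f \<theta> - trig_poly J d \<theta>))\<^sup>2) integrable_on {-pi..pi}"
        using CCf by (intro integrable_continuous_interval continuous_intros) auto
      show "(\<lambda>\<theta>. e'\<^sup>2) integrable_on {-pi..pi}" by (intro integrable_continuous_interval continuous_intros)
      fix \<theta> assume "\<theta> \<in> {-pi..pi}"
      then show "(cmod (f \<theta> - trig_poly J d \<theta>))\<^sup>2 \<le> e'\<^sup>2"
        using Jd(2) unfolding f_def by (intro power_mono) auto
    qed
    also have "\<dots> = e" using e'2 by simp
    finally show ?thesis .
  qed
  then show ?thesis unfolding f_def by blast
qed

lemma l2_sq_fourier_remainder_split: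
  assumes f: "cont_pi f" and NM: "N \<le> M"
  shows "l2_sq (\<lambda>\<theta>. f \<theta> - trig_poly {-N..N} (fourier_coeff f) \<theta>)
    = l2_sq (\<lambda>\<theta>. f \<theta> - trig_poly {-M..M} (fourier_coeff f) \<theta>)
      + 2 * pi * (\<Sum>j\<in>{-M..M} - {-N..N}. (cmod (fourier_coeff f j))\<^sup>2)"
proof -
  define d where "d = (\<lambda>j. if j \<in> {-N..N} then fourier_coeff f j else 0)"
  have "trig_poly {-N..N} (fourier_coeff f) \<theta> = trig_poly {-M..M} d \<theta>" for \<theta>
    unfolding d_def by (rule trig_poly_extend) (use NM in auto)
  then have "l2_sq (\<lambda>\<theta>. f \<theta> - trig_poly {-N..N} (fourier_coeff f) \<theta>)
      = l2_sq (\<lambda>\<theta>. f \<theta> - trig_poly {-M..M} (fourier_coeff f) \<theta>)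
        + 2 * pi * (\<Sum>j\<in>{-M..M}. (cmod (fourier_coeff f j - d j))\<^sup>2)"
    using l2_sq_remainder_best_approx[OF f, of "{-M..M}" d] by simp
  also have "(\<Sum>j\<in>{-M..M}. (cmod (fourier_coeff f j - d j))\<^sup>2)
      = (\<Sum>j\<in>{-M..M} - {-N..N}. (cmod (fourier_coeff f j))\<^sup>2)"
    by (rule sum.mono_neutral_cong_right) (auto simp: d_def)
  finally show ?thesis .
qed

lemma sum_sq_outside_le_weighted_sum:
  fixes c :: "int \<Rightarrow> complex" and N M :: int
  assumes N: "N \<ge> 0"
  shows "(\<Sum>j\<in>{-M..M} - {-N..N}. (cmod (c j))\<^sup>2)
    \<le> (\<Sum>j\<in>{-M..M}. real_of_int \<bar>j\<bar> ^ (2*k) * (cmod (c j))\<^sup>2) / (of_int N + 1) ^ (2*k)"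
proof -
  define q where "q = (of_int N + 1 :: real) ^ (2*k)"
  have q0: "q > 0" unfolding q_def using N by simp
  have "(\<Sum>j\<in>{-M..M} - {-N..N}. (cmod (c j))\<^sup>2)
      \<le> (\<Sum>j\<in>{-M..M} - {-N..N}. real_of_int \<bar>j\<bar> ^ (2*k) * (cmod (c j))\<^sup>2 / q)"
  proof (rule sum_mono)
    fix j assume "j \<in> {-M..M} - {-N..N}"
    then have "q \<le> real_of_int \<bar>j\<bar> ^ (2*k)" unfolding q_def using N by (intro power_mono) auto
    then have "1 * (cmod (c j))\<^sup>2 \<le> (real_of_int \<bar>j\<bar> ^ (2*k) / q) * (cmod (c j))\<^sup>2"
      using q0 by (intro mult_right_mono) auto
    then show "(cmod (c j))\<^sup>2 \<le> real_of_int \<bar>j\<bar> ^ (2*k) * (cmod (c j))\<^sup>2 / q" by simp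
  qed
  also have "\<dots> \<le> (\<Sum>j\<in>{-M..M}. real_of_int \<bar>j\<bar> ^ (2*k) * (cmod (c j))\<^sup>2) / q"
    unfolding sum_divide_distrib[symmetric] using q0 by (intro divide_right_mono sum_mono2) auto
  finally show ?thesis unfolding q_def .
qed

lemma fourier_remainder_l2_le:
  fixes V :: "real \<Rightarrow> real" and N :: int
  assumes cont: "continuous_on UNIV V" and per: "\<forall>x. V (x + 2*pi) = V x" and N: "N \<ge> 0"
    and B: "\<And>M. (\<Sum>j\<in>{-M..M}. real_of_int \<bar>j\<bar> ^ (2*k) * (cmod (fourier_coeff (\<lambda>\<theta>. of_real (V \<theta>)) j))\<^sup>2) \<le> B"
  shows "l2_sq (\<lambda>\<theta>. of_real (V \<theta>) - trig_poly {-N..N} (fourier_coeff (\<lambda>\<theta>. of_real (V \<theta>))) \<theta>) \<le> 2 * pi * B / (of_int N + 1) ^ (2*k)"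
proof (rule field_le_epsilon)
  define f where "f = (\<lambda>\<theta>. complex_of_real (V \<theta>))"
  have f: "cont_pi f" unfolding f_def
    by (intro continuous_intros continuous_on_subset[OF cont]) auto
  fix e :: real assume e: "e > 0"
  obtain M0 where M0: "\<And>M. M \<ge> M0 \<Longrightarrow> l2_sq (\<lambda>\<theta>. f \<theta> - trig_poly {-M..M} (fourier_coeff f) \<theta>) \<le> e"
    using fourier_remainder_l2_small[OF cont per e] unfolding f_def by blast
  define M where "M = max M0 N"
  have "l2_sq (\<lambda>\<theta>. f \<theta> - trig_poly {-N..N} (fourier_coeff f) \<theta>)
      \<le> e + 2 * pi * (\<Sum>j\<in>{-M..M} - {-N..N}. (cmod (fourier_coeff f j))\<^sup>2)"
    using l2_sq_fourier_remainder_split[OF f, of N M] M0[of M] unfolding M_def by simp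
  also have "\<dots> \<le> e + 2 * pi * (B / (of_int N + 1) ^ (2*k))"
  proof -
    have "(\<Sum>j\<in>{-M..M} - {-N..N}. (cmod (fourier_coeff f j))\<^sup>2) \<le> B / (of_int N + 1) ^ (2*k)"
      using order_trans[OF sum_sq_outside_le_weighted_sum[OF N] divide_right_mono[OF B[of M]]]
      unfolding f_def by simp
    then show ?thesis by (intro add_left_mono mult_left_mono) auto
  qed
  finally show "l2_sq (\<lambda>\<theta>. of_real (V \<theta>) - trig_poly {-N..N} (fourier_coeff (\<lambda>\<theta>. of_real (V \<theta>))) \<theta>)
      \<le> 2 * pi * B / (of_int N + 1) ^ (2*k) + e"
    unfolding f_def by simp
qed

section \<open>Fourier coefficients of functions in C^{k-1,1}\<close>

lemma integral_periodic_shift: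
  fixes g :: "real \<Rightarrow> complex"
  assumes cont: "continuous_on UNIV g" and per: "\<And>x. g (x + 2*pi) = g x"
    and h: "0 \<le> h" "h \<le> 2*pi"
  shows "integral {-pi..pi} (\<lambda>\<theta>. g (\<theta> + h)) = integral {-pi..pi} g"
proof -
  have int: "g integrable_on {a..b}" for a b
    by (intro integrable_continuous_interval continuous_on_subset[OF cont]) auto
  have 1: "integral {-pi..pi} (\<lambda>\<theta>. g (\<theta> + h)) = integral {-pi+h..pi+h} g"
    using integral_shift_real_ivl[of "-pi+h" h "pi+h" g] by simp
  have 2: "integral {-pi+h..pi} g + integral {pi..pi+h} g = integral {-pi+h..pi+h} g"
    using h by (intro Henstock_Kurzweil_Integration.integral_combine int) auto
  have 3: "integral {pi..pi+h} g = integral {-pi..-pi+h} g"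
  proof -
    have "integral {pi - 2*pi..pi+h - 2*pi} (\<lambda>x. g (x + 2*pi)) = integral {pi..pi+h} g"
      by (rule integral_shift_real_ivl)
    then show ?thesis using per by simp
  qed
  have 4: "integral {-pi..-pi+h} g + integral {-pi+h..pi} g = integral {-pi..pi} g"
    using h by (intro Henstock_Kurzweil_Integration.integral_combine int) auto
  show ?thesis using 1 2 3 4 by (simp add: add.commute)
qed

lemma derivative_chain_continuous:
  fixes D :: "nat \<Rightarrow> real \<Rightarrow> real"
  assumes Dder: "\<forall>j<k-1. \<forall>x. (D j has_real_derivative D (Suc j) x) (at x)"
    and Lip: "\<forall>x y. \<bar>D (k-1) x - D (k-1) y\<bar> \<le> L * \<bar>x - y\<bar>" and r: "r \<le> k-1"
  shows "continuous_on UNIV (D r)"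
proof (cases "r < k-1")
  case True
  then show ?thesis using Dder
    by (intro continuous_at_imp_continuous_on) (auto intro: DERIV_isCont)
next
  case False
  then have rk: "r = k-1" using r by simp
  have "\<bar>D (k-1) 1 - D (k-1) 0\<bar> \<le> L" using Lip[rule_format, of 1 0] by simp
  then have lipschitz_const_nonneg: "0 \<le> L" by (meson abs_ge_zero order_trans)
  have "lipschitz_on L UNIV (D r)"
    unfolding lipschitz_on_def using lipschitz_const_nonneg Lip rk by (auto simp: dist_real_def)
  then show ?thesis by (rule lipschitz_on_continuous_on)
qed

lemma derivative_chain_periodic:
  fixes D :: "nat \<Rightarrow> real \<Rightarrow> real"
  assumes Dder: "\<forall>j<k-1. \<forall>x. (D j has_real_derivative D (Suc j) x) (at x)"
    and per: "\<forall>x. D 0 (x + 2*pi) = D 0 x"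
  shows "r \<le> k-1 \<Longrightarrow> \<forall>x. D r (x + 2*pi) = D r x"
proof (induction r)
  case 0
  then show ?case using per by simp
next
  case (Suc r)
  then have IH: "\<forall>x. D r (x + 2*pi) = D r x" and rk: "r < k-1" by auto
  show ?case
  proof
    fix x
    have d1: "(D r has_real_derivative D (Suc r) x) (at x)" using Dder rk by auto
    have "(D r has_real_derivative D (Suc r) (x + 2*pi)) (at (x + 2*pi))" using Dder rk by auto
    then have "((\<lambda>y. D r (y + 2*pi)) has_real_derivative D (Suc r) (x + 2*pi)) (at x)"
      by (simp add: DERIV_shift)
    then have "(D r has_real_derivative D (Suc r) (x + 2*pi)) (at x)" using IH by simp
    then show "D (Suc r) (x + 2*pi) = D (Suc r) x" using d1 by (rule DERIV_unique)
  qed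
qed

lemma l2_inner_of_real_cis_mode: "l2_inner (\<lambda>\<theta>. complex_of_real (f \<theta>)) (cis_mode j) = integral {-pi..pi} (\<lambda>\<theta>. f \<theta> *\<^sub>R cis ((- of_int j) * \<theta>))"
  unfolding l2_inner_def cnj_cis_mode by (simp add: scaleR_conv_of_real)

lemma l2_inner_derivative_cis_mode:
  fixes f f' :: "real \<Rightarrow> real"
  assumes der: "\<And>x. (f has_real_derivative f' x) (at x)" and cf': "continuous_on UNIV f'"
    and fp: "f pi = f (-pi)"
  shows "l2_inner (\<lambda>\<theta>. complex_of_real (f' \<theta>)) (cis_mode j) = \<i> * of_int j * l2_inner (\<lambda>\<theta>. complex_of_real (f \<theta>)) (cis_mode j)"
proof -
  define c where "c = - real_of_int j"
  define G where "G = (\<lambda>\<theta>. f \<theta> *\<^sub>R cis (c * \<theta>))"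
  have cf: "continuous_on UNIV f"
    by (intro continuous_at_imp_continuous_on) (auto intro: DERIV_isCont der)
  have "((\<lambda>\<theta>. f \<theta> *\<^sub>R (\<i> * of_real c * cis (c * \<theta>)) + f' \<theta> *\<^sub>R cis (c * \<theta>)) has_integral (G pi - G (-pi))) {-pi..pi}"
  proof (rule fundamental_theorem_of_calculus)
    fix x assume "x \<in> {-pi..pi}"
    show "(G has_vector_derivative (f x *\<^sub>R (\<i> * of_real c * cis (c * x)) + f' x *\<^sub>R cis (c * x))) (at x within {-pi..pi})"
      unfolding G_def
      by (rule has_vector_derivative_scaleR[OF DERIV_subset[OF der] has_vector_derivative_cis_linear]) auto
  qed simp
  moreover have "G pi - G (-pi) = 0"
  proof -
    have "cis (c * pi) = cis (c * (-pi))" using cis_mode_pi[of "-j"] unfolding cis_mode_def c_def by simp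
    then show ?thesis unfolding G_def using fp by simp
  qed
  ultimately have hi: "((\<lambda>\<theta>. f \<theta> *\<^sub>R (\<i> * of_real c * cis (c * \<theta>)) + f' \<theta> *\<^sub>R cis (c * \<theta>)) has_integral 0) {-pi..pi}"
    by simp
  have i1: "(\<lambda>\<theta>. f \<theta> *\<^sub>R (\<i> * of_real c * cis (c * \<theta>))) integrable_on {-pi..pi}"
    by (intro integrable_continuous_interval continuous_intros continuous_on_subset[OF cf]) auto
  have i2: "(\<lambda>\<theta>. f' \<theta> *\<^sub>R cis (c * \<theta>)) integrable_on {-pi..pi}"
    by (intro integrable_continuous_interval continuous_intros continuous_on_subset[OF cf']) auto
  have "integral {-pi..pi} (\<lambda>\<theta>. f \<theta> *\<^sub>R (\<i> * of_real c * cis (c * \<theta>))) + integral {-pi..pi} (\<lambda>\<theta>. f' \<theta> *\<^sub>R cis (c * \<theta>)) = 0"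
    using integral_add[OF i1 i2] integral_unique[OF hi] by simp
  moreover have "integral {-pi..pi} (\<lambda>\<theta>. f \<theta> *\<^sub>R (\<i> * of_real c * cis (c * \<theta>))) = (\<i> * of_real c) * integral {-pi..pi} (\<lambda>\<theta>. f \<theta> *\<^sub>R cis (c * \<theta>))"
  proof -
    have "(\<lambda>\<theta>. f \<theta> *\<^sub>R (\<i> * of_real c * cis (c * \<theta>))) = (\<lambda>\<theta>. (\<i> * of_real c) * (f \<theta> *\<^sub>R cis (c * \<theta>)))"
      by (rule ext) (simp add: scaleR_conv_of_real algebra_simps)
    then show ?thesis by (simp only: integral_mult_right)
  qed
  ultimately have "integral {-pi..pi} (\<lambda>\<theta>. f' \<theta> *\<^sub>R cis (c * \<theta>)) = - (\<i> * of_real c) * integral {-pi..pi} (\<lambda>\<theta>. f \<theta> *\<^sub>R cis (c * \<theta>))"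
    by (simp add: eq_neg_iff_add_eq_0 add.commute)
  then show ?thesis unfolding l2_inner_of_real_cis_mode c_def by simp
qed

lemma fourier_coeff_derivative_chain:
  fixes D :: "nat \<Rightarrow> real \<Rightarrow> real"
  assumes Dder: "\<forall>j<k-1. \<forall>x. (D j has_real_derivative D (Suc j) x) (at x)"
    and Lip: "\<forall>x y. \<bar>D (k-1) x - D (k-1) y\<bar> \<le> L * \<bar>x - y\<bar>"
    and per: "\<forall>x. D 0 (x + 2*pi) = D 0 x"
  shows "r \<le> k-1 \<Longrightarrow> fourier_coeff (\<lambda>\<theta>. of_real (D r \<theta>)) j = (\<i> * of_int j) ^ r * fourier_coeff (\<lambda>\<theta>. of_real (D 0 \<theta>)) j"
proof (induction r)
  case 0
  then show ?case by simp
next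
  case (Suc r)
  then have rk: "r < k-1" by simp
  have der: "\<And>x. (D r has_real_derivative D (Suc r) x) (at x)" using Dder rk by auto
  have cont: "continuous_on UNIV (D (Suc r))" using derivative_chain_continuous[OF Dder Lip] Suc.prems by simp
  have per_r: "\<forall>x. D r (x + 2*pi) = D r x" using derivative_chain_periodic[OF Dder per, of r] rk by simp
  have "D r (-pi + 2*pi) = D r (-pi)" using per_r[rule_format, of "-pi"] .
  moreover have "-pi + 2*pi = pi" by simp
  ultimately have fp: "D r pi = D r (-pi)" by metis
  have "fourier_coeff (\<lambda>\<theta>. of_real (D (Suc r) \<theta>)) j = \<i> * of_int j * fourier_coeff (\<lambda>\<theta>. of_real (D r \<theta>)) j"
    unfolding fourier_coeff_def using l2_inner_derivative_cis_mode[OF der cont fp] by simp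
  then show ?case using Suc by simp
qed

lemma norm_cis_minus_one_squared: "(cmod (cis x - 1))\<^sup>2 = (2 * sin (x/2))\<^sup>2"
proof -
  have "(cmod (cis x - 1))\<^sup>2 = (cos x - 1)\<^sup>2 + (sin x)\<^sup>2" by (simp add: cmod_power2)
  also have "\<dots> = 2 - 2 * cos x" using sin_cos_squared_add[of x] by (simp add: power2_eq_square algebra_simps)
  also have "cos x = 1 - 2 * sin (x/2) ^ 2" using cos_double_sin[of "x/2"] by simp
  finally show ?thesis by (simp add: power_mult_distrib)
qed

lemma sin_difference_quotient_tendsto: "((\<lambda>h. 2 * sin (of_int j * h / 2) / h) \<longlongrightarrow> real_of_int j) (at_right 0)"
proof -
  have "((\<lambda>h. 2 * sin (of_int j * h / 2)) has_real_derivative real_of_int j) (at 0)"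
    by (auto intro!: derivative_eq_intros)
  then have "((\<lambda>h. (2 * sin (of_int j * h / 2) - 2 * sin (of_int j * 0 / 2)) / (h - 0)) \<longlongrightarrow> real_of_int j) (at 0)"
    by (simp only: has_field_derivative_iff)
  then have "((\<lambda>h. 2 * sin (of_int j * h / 2) / h) \<longlongrightarrow> real_of_int j) (at 0)" by simp
  then show ?thesis by (rule tendsto_mono[OF at_le, rotated]) simp
qed

lemma fourier_coeff_translate_diff:
  fixes G :: "real \<Rightarrow> complex"
  assumes cG: "continuous_on UNIV G" and per: "\<And>x. G (x + 2*pi) = G x" and h: "0 \<le> h" "h \<le> 2*pi"
  shows "fourier_coeff (\<lambda>\<theta>. G (\<theta> + h) - G \<theta>) j = (cis_mode j h - 1) * fourier_coeff G j"
proof -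
  define \<Phi> where "\<Phi> = (\<lambda>t. G t * cnj (cis_mode j t))"
  have c\<Phi>: "continuous_on UNIV \<Phi>" unfolding \<Phi>_def by (intro continuous_intros cG)
  have p\<Phi>: "\<Phi> (x + 2*pi) = \<Phi> x" for x unfolding \<Phi>_def using per cis_mode_periodic by simp
  have cGh: "continuous_on UNIV (\<lambda>\<theta>. G (\<theta> + h))"
    by (intro continuous_on_compose2[OF cG] continuous_intros) auto
  have "G (\<theta> + h) * cnj (cis_mode j \<theta>) = cis_mode j h * \<Phi> (\<theta> + h)" for \<theta>
    unfolding \<Phi>_def by (simp add: cis_mode_def cis_cnj cis_mult algebra_simps)
  then have "l2_inner (\<lambda>\<theta>. G (\<theta> + h)) (cis_mode j) = cis_mode j h * integral {-pi..pi} (\<lambda>\<theta>. \<Phi> (\<theta> + h))"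
    unfolding l2_inner_def by (simp add: integral_mult_right)
  also have "integral {-pi..pi} (\<lambda>\<theta>. \<Phi> (\<theta> + h)) = l2_inner G (cis_mode j)"
    unfolding integral_periodic_shift[OF c\<Phi> p\<Phi> h] unfolding \<Phi>_def l2_inner_def ..
  finally have "l2_inner (\<lambda>\<theta>. G (\<theta> + h) - G \<theta>) (cis_mode j) = (cis_mode j h - 1) * l2_inner G (cis_mode j)"
    by (subst l2_inner_diff_left)
       (auto intro: continuous_on_subset[OF cGh] continuous_on_subset[OF cG] simp: algebra_simps)
  then show ?thesis unfolding fourier_coeff_def by simp
qed

lemma lipschitz_difference_quotient_fourier_le:
  fixes g :: "real \<Rightarrow> real" and J :: "int set"
  assumes cont: "continuous_on UNIV g" and per: "\<forall>x. g (x + 2*pi) = g x"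
    and Lip: "\<forall>x y. \<bar>g x - g y\<bar> \<le> L * \<bar>x - y\<bar>" and J: "finite J" and h: "0 < h" "h \<le> 2*pi"
  shows "(\<Sum>j\<in>J. (2 * sin (of_int j * h / 2) / h)\<^sup>2 * (cmod (fourier_coeff (\<lambda>\<theta>. of_real (g \<theta>)) j))\<^sup>2) \<le> L\<^sup>2"
proof -
  define G where "G = (\<lambda>\<theta>. complex_of_real (g \<theta>))"
  define dh where "dh = (\<lambda>\<theta>. G (\<theta> + h) - G \<theta>)"
  have cG: "continuous_on UNIV G" unfolding G_def by (intro continuous_intros cont)
  have pG: "G (x + 2*pi) = G x" for x unfolding G_def using per by simp
  have CCdh: "cont_pi dh" unfolding dh_def
    by (intro continuous_intros continuous_on_compose2[OF cG]) auto
  have "2*pi * (\<Sum>j\<in>J. (cmod (fourier_coeff dh j))\<^sup>2) \<le> l2_sq dh" by (rule bessel_inequality[OF CCdh J])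
  also have "l2_sq dh \<le> integral {-pi..pi} (\<lambda>\<theta>. (L*h)\<^sup>2)"
    unfolding l2_sq_eq_integral[OF CCdh]
  proof (rule integral_le)
    fix \<theta> :: real
    have "cmod (dh \<theta>) = \<bar>g (\<theta> + h) - g \<theta>\<bar>" unfolding dh_def G_def
      by (simp only: of_real_diff[symmetric] norm_of_real)
    also have "\<dots> \<le> L * h" using Lip[rule_format, of "\<theta> + h" \<theta>] h by simp
    finally show "(cmod (dh \<theta>))\<^sup>2 \<le> (L*h)\<^sup>2" by (intro power_mono) auto
  qed (use CCdh in \<open>auto intro!: integrable_continuous_interval continuous_intros\<close>)
  finally have S: "(\<Sum>j\<in>J. (cmod (fourier_coeff dh j))\<^sup>2) \<le> (L*h)\<^sup>2" by simp
  have "(\<Sum>j\<in>J. (2 * sin (of_int j * h / 2) / h)\<^sup>2 * (cmod (fourier_coeff G j))\<^sup>2)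
      = (\<Sum>j\<in>J. (cmod (fourier_coeff dh j))\<^sup>2) / h\<^sup>2"
    unfolding sum_divide_distrib dh_def
    using fourier_coeff_translate_diff[OF cG pG less_imp_le[OF h(1)] h(2)]
    by (intro sum.cong refl)
       (simp add: norm_mult power_mult_distrib cis_mode_def norm_cis_minus_one_squared power_divide)
  also have "\<dots> \<le> L\<^sup>2" using S h by (simp add: divide_le_eq power_mult_distrib)
  finally show ?thesis unfolding G_def .
qed

lemma lipschitz_fourier_coeff_bound:
  fixes g :: "real \<Rightarrow> real" and J :: "int set"
  assumes cont: "continuous_on UNIV g" and per: "\<forall>x. g (x + 2*pi) = g x"
    and Lip: "\<forall>x y. \<bar>g x - g y\<bar> \<le> L * \<bar>x - y\<bar>" and J: "finite J"
  shows "(\<Sum>j\<in>J. (real_of_int j)\<^sup>2 * (cmod (fourier_coeff (\<lambda>\<theta>. of_real (g \<theta>)) j))\<^sup>2) \<le> L\<^sup>2"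
proof -
  define c where "c = fourier_coeff (\<lambda>\<theta>. of_real (g \<theta>))"
  have "((\<lambda>h. \<Sum>j\<in>J. (2 * sin (of_int j * h / 2) / h)\<^sup>2 * (cmod (c j))\<^sup>2)
      \<longlongrightarrow> (\<Sum>j\<in>J. (real_of_int j)\<^sup>2 * (cmod (c j))\<^sup>2)) (at_right 0)"
    by (intro tendsto_intros sin_difference_quotient_tendsto)
  moreover have "eventually (\<lambda>h. h \<in> {0<..<2*pi}) (at_right (0::real))"
    by (rule eventually_at_right_real) simp
  then have "eventually (\<lambda>h. (\<Sum>j\<in>J. (2 * sin (of_int j * h / 2) / h)\<^sup>2 * (cmod (c j))\<^sup>2) \<le> L\<^sup>2) (at_right 0)"
    unfolding c_def
    by eventually_elim (auto intro: lipschitz_difference_quotient_fourier_le[OF cont per Lip J])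
  ultimately show ?thesis
    unfolding c_def by (rule tendsto_le[OF trivial_limit_at_right_real tendsto_const])
qed

lemma fourier_coeff_decay:
  fixes D :: "nat \<Rightarrow> real \<Rightarrow> real" and V :: "real \<Rightarrow> real" and M :: int
  assumes k: "k \<ge> 1" and per: "\<forall>x. V (x + 2*pi) = V x" and D0: "D 0 = V"
    and Dder: "\<forall>j<k-1. \<forall>x. (D j has_real_derivative D (Suc j) x) (at x)"
    and Lip: "\<forall>x y. \<bar>D (k-1) x - D (k-1) y\<bar> \<le> L * \<bar>x - y\<bar>"
  shows "(\<Sum>j\<in>{-M..M}. real_of_int \<bar>j\<bar> ^ (2*k) * (cmod (fourier_coeff (\<lambda>\<theta>. of_real (V \<theta>)) j))\<^sup>2) \<le> L\<^sup>2"
proof -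
  have per0: "\<forall>x. D 0 (x + 2*pi) = D 0 x" using per D0 by simp
  have cg: "continuous_on UNIV (D (k-1))" using derivative_chain_continuous[OF Dder Lip] by simp
  have pg: "\<forall>x. D (k-1) (x + 2*pi) = D (k-1) x" using derivative_chain_periodic[OF Dder per0] by simp
  have B: "(\<Sum>j\<in>{-M..M}. (real_of_int j)\<^sup>2 * (cmod (fourier_coeff (\<lambda>\<theta>. of_real (D (k-1) \<theta>)) j))\<^sup>2) \<le> L\<^sup>2"
    by (rule lipschitz_fourier_coeff_bound[OF cg pg Lip]) simp
  have "(real_of_int j)\<^sup>2 * (cmod (fourier_coeff (\<lambda>\<theta>. of_real (D (k-1) \<theta>)) j))\<^sup>2
      = real_of_int \<bar>j\<bar> ^ (2*k) * (cmod (fourier_coeff (\<lambda>\<theta>. of_real (V \<theta>)) j))\<^sup>2" for j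
  proof -
    have "fourier_coeff (\<lambda>\<theta>. of_real (D (k-1) \<theta>)) j = (\<i> * of_int j) ^ (k-1) * fourier_coeff (\<lambda>\<theta>. of_real (V \<theta>)) j"
      using fourier_coeff_derivative_chain[OF Dder Lip per0, of "k-1" j] D0 by simp
    then have "(cmod (fourier_coeff (\<lambda>\<theta>. of_real (D (k-1) \<theta>)) j))\<^sup>2 = (real_of_int \<bar>j\<bar>) ^ (2*(k-1)) * (cmod (fourier_coeff (\<lambda>\<theta>. of_real (V \<theta>)) j))\<^sup>2"
      by (simp add: norm_mult norm_power power_mult_distrib power_mult[symmetric] mult.commute[of 2])
    moreover have "(real_of_int j)\<^sup>2 * (real_of_int \<bar>j\<bar>) ^ (2*(k-1)) = real_of_int \<bar>j\<bar> ^ (2*k)"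
    proof -
      have "(real_of_int j)\<^sup>2 = (real_of_int \<bar>j\<bar>)^2" by simp
      moreover have "2 + 2*(k-1) = 2*k" using k by simp
      ultimately show ?thesis by (metis power_add)
    qed
    ultimately show ?thesis by (simp add: mult.assoc[symmetric])
  qed
  then show ?thesis using B by simp
qed

section \<open>Polynomials on the unit circle\<close>

lemma integral_entire_cis:
  fixes f :: "complex \<Rightarrow> complex"
  assumes hol: "f holomorphic_on UNIV"
  shows "integral {-pi..pi} (\<lambda>\<theta>. f (cis \<theta>)) = of_real (2 * pi) * f 0"
proof -
  have hf: "f holomorphic_on cball 0 1" using hol holomorphic_on_subset by blast
  have "((\<lambda>u. f u / (u - 0)) has_contour_integral (2 * of_real pi * \<i> * f 0)) (part_circlepath 0 1 0 (2*pi))"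
    using Cauchy_integral_circlepath_simple[OF hf, of 0] unfolding circlepath_def by simp
  then have hi: "((\<lambda>t. f (0 + 1 * cis t) / (0 + 1 * cis t - 0) * 1 * \<i> * cis t) has_integral (2 * of_real pi * \<i> * f 0)) {0..2*pi}"
    by (subst (asm) has_contour_integral_part_circlepath_iff) auto
  have "((\<lambda>t. \<i> * f (cis t)) has_integral (2 * of_real pi * \<i> * f 0)) {0..2*pi}"
    by (rule has_integral_eq[OF _ hi]) (simp_all add: field_simps)
  then have "((\<lambda>t. (- \<i>) * (\<i> * f (cis t))) has_integral (- \<i>) * (2 * of_real pi * \<i> * f 0)) {0..2*pi}"
    by (rule has_integral_mult_right)
  moreover have "- (\<i> * (2 * complex_of_real pi * \<i> * f 0)) = 2 * of_real pi * f 0"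
    by (simp add: complex_eq_iff)
  ultimately have h02: "((\<lambda>t. f (cis t)) has_integral (2 * of_real pi * f 0)) {0..2*pi}" by simp
  define F where "F = (\<lambda>\<theta>. f (cis \<theta>))"
  have cF: "continuous_on UNIV F" unfolding F_def
    by (intro continuous_on_compose2[OF holomorphic_on_imp_continuous_on[OF hol]] continuous_intros) auto
  have pF: "F (x + 2*pi) = F x" for x unfolding F_def by (simp add: cis_mult[symmetric])
  have "integral {-pi..pi} F = integral {-pi..pi} (\<lambda>\<theta>. F (\<theta> + pi))"
    by (rule integral_periodic_shift[OF cF pF, symmetric]) auto
  also have "\<dots> = integral {-pi + pi..pi + pi} F"
    using integral_shift_real_ivl[of "-pi + pi" pi "pi + pi" F] by simp
  also have "\<dots> = 2 * of_real pi * f 0" using h02 unfolding F_def by (simp add: integral_unique)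
  finally show ?thesis unfolding F_def by simp
qed

lemma poly_cis_eq_trig_poly:
  fixes P :: "complex poly"
  assumes "degree P \<le> N"
  shows "poly P (cis \<theta>) = trig_poly (int ` {..N}) (\<lambda>j. coeff P (nat j)) \<theta>"
proof -
  have "poly P (cis \<theta>) = (\<Sum>i\<le>degree P. coeff P i * cis \<theta> ^ i)"
    by (simp add: poly_altdef)
  also have "\<dots> = (\<Sum>i\<le>N. coeff P i * cis \<theta> ^ i)"
    using assms by (intro sum.mono_neutral_left) (auto simp: coeff_eq_0)
  also have "\<dots> = (\<Sum>i\<le>N. coeff P (nat (int i)) * cis_mode (int i) \<theta>)"
    unfolding cis_mode_def Complex.DeMoivre by simp
  also have "\<dots> = trig_poly (int ` {..N}) (\<lambda>j. coeff P (nat j)) \<theta>"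
    unfolding trig_poly_def by (subst sum.reindex) (auto simp: inj_on_def)
  finally show ?thesis .
qed

lemma l2_sq_poly_cis:
  fixes P :: "complex poly"
  assumes "degree P \<le> N"
  shows "l2_sq (\<lambda>\<theta>. poly P (cis \<theta>)) = 2 * pi * (\<Sum>i\<le>N. (cmod (coeff P i))\<^sup>2)"
proof -
  have "l2_sq (\<lambda>\<theta>. poly P (cis \<theta>)) = l2_sq (trig_poly (int ` {..N}) (\<lambda>j. coeff P (nat j)))"
    using poly_cis_eq_trig_poly[OF assms] by presburger
  also have "\<dots> = 2 * pi * (\<Sum>j\<in>int ` {..N}. (cmod (coeff P (nat j)))\<^sup>2)"
    by (rule l2_sq_trig_poly) simp
  also have "(\<Sum>j\<in>int ` {..N}. (cmod (coeff P (nat j)))\<^sup>2) = (\<Sum>i\<le>N. (cmod (coeff P i))\<^sup>2)"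
    by (subst sum.reindex) (auto simp: inj_on_def)
  finally show ?thesis .
qed

definition wnorm_upto :: "nat \<Rightarrow> nat \<Rightarrow> complex poly \<Rightarrow> real" where
  "wnorm_upto k N P = L2_set (\<lambda>i. (1 + real i) ^ k * cmod (coeff P i)) {..N}"

definition wnorm :: "nat \<Rightarrow> complex poly \<Rightarrow> real" where
  "wnorm k P = wnorm_upto k (degree P) P"

definition l1norm_upto :: "nat \<Rightarrow> complex poly \<Rightarrow> real" where
  "l1norm_upto N P = (\<Sum>i\<le>N. cmod (coeff P i))"

definition l1norm :: "complex poly \<Rightarrow> real" where
  "l1norm P = l1norm_upto (degree P) P"

lemma wnorm_upto_eq: "degree P \<le> N \<Longrightarrow> wnorm_upto k N P = wnorm k P"
  unfolding wnorm_def wnorm_upto_def L2_set_def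
  by (intro arg_cong[where f = sqrt] sum.mono_neutral_right) (auto simp: coeff_eq_0)

lemma l1norm_upto_eq: "degree P \<le> N \<Longrightarrow> l1norm_upto N P = l1norm P"
  unfolding l1norm_def l1norm_upto_def
  by (intro sum.mono_neutral_right) (auto simp: coeff_eq_0)

lemma wnorm_nonneg: "wnorm k P \<ge> 0"
  unfolding wnorm_def wnorm_upto_def by simp

lemma wnorm_add_le: "wnorm k (P + Q) \<le> wnorm k P + wnorm k Q"
proof -
  define N where "N = max (degree P) (degree Q)"
  have dP: "degree P \<le> N" and dQ: "degree Q \<le> N" and dPQ: "degree (P + Q) \<le> N"
    unfolding N_def by (auto intro: degree_add_le)
  have "wnorm_upto k N (P + Q) \<le> L2_set (\<lambda>i. (1 + real i) ^ k * cmod (coeff P i) + (1 + real i) ^ k * cmod (coeff Q i)) {..N}"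
    unfolding wnorm_upto_def
  proof (rule L2_set_mono)
    fix i
    have "cmod (coeff (P + Q) i) \<le> cmod (coeff P i) + cmod (coeff Q i)"
      by (simp add: norm_triangle_ineq)
    then show "(1 + real i) ^ k * cmod (coeff (P + Q) i) \<le> (1 + real i) ^ k * cmod (coeff P i) + (1 + real i) ^ k * cmod (coeff Q i)"
      by (simp add: distrib_left[symmetric] mult_left_mono)
  qed simp
  also have "\<dots> \<le> wnorm_upto k N P + wnorm_upto k N Q" unfolding wnorm_upto_def by (rule L2_set_triangle_ineq)
  finally show ?thesis using wnorm_upto_eq[OF dP] wnorm_upto_eq[OF dQ] wnorm_upto_eq[OF dPQ] by simp
qed

lemma wnorm_smult: "wnorm k (smult c P) = cmod c * wnorm k P"
proof -
  have d: "degree (smult c P) \<le> degree P" by (rule degree_smult_le)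
  have "wnorm_upto k (degree P) (smult c P) = cmod c * wnorm_upto k (degree P) P"
    unfolding wnorm_upto_def by (subst L2_set_right_distrib) (auto simp: norm_mult algebra_simps)
  then show ?thesis using wnorm_upto_eq[OF d] by (simp add: wnorm_def)
qed

lemma wnorm_0 [simp]: "wnorm k 0 = 0"
  unfolding wnorm_def wnorm_upto_def by simp

lemma wnorm_1 [simp]: "wnorm k 1 = 1"
  unfolding wnorm_def wnorm_upto_def by simp

lemma wnorm_sum_le: "finite S \<Longrightarrow> wnorm k (\<Sum>l\<in>S. F l) \<le> (\<Sum>l\<in>S. wnorm k (F l))"
proof (induction S rule: finite_induct)
  case empty
  then show ?case by simp
next
  case (insert x S)
  then show ?case using wnorm_add_le[of k "F x" "sum F S"] by simp
qed

lemma l2_sq_poly_minus_cutoff_le: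
  "integral {-pi..pi} (\<lambda>\<theta>. (cmod (poly (P - poly_cutoff (Suc n) P) (cis \<theta>)))\<^sup>2)
     \<le> 2 * pi * (wnorm k P)\<^sup>2 / (real n + 1) ^ (2*k)"
proof -
  define w where "w = (real n + 1) ^ (2*k)"
  have w: "w > 0" unfolding w_def by simp
  have deg: "degree (P - poly_cutoff (Suc n) P) \<le> degree P"
    by (rule degree_le) (auto simp: coeff_poly_cutoff coeff_eq_0)
  have "integral {-pi..pi} (\<lambda>\<theta>. (cmod (poly (P - poly_cutoff (Suc n) P) (cis \<theta>)))\<^sup>2)
      = l2_sq (\<lambda>\<theta>. poly (P - poly_cutoff (Suc n) P) (cis \<theta>))"
    by (rule l2_sq_eq_integral[symmetric]) (intro continuous_intros)
  also have "\<dots> = 2 * pi * (\<Sum>i\<le>degree P. (cmod (coeff (P - poly_cutoff (Suc n) P) i))\<^sup>2)"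
    by (rule l2_sq_poly_cis[OF deg])
  also have "(\<Sum>i\<le>degree P. (cmod (coeff (P - poly_cutoff (Suc n) P) i))\<^sup>2)
      \<le> (\<Sum>i\<le>degree P. ((1 + real i) ^ k * cmod (coeff P i))\<^sup>2 / w)"
  proof (rule sum_mono)
    fix i
    show "(cmod (coeff (P - poly_cutoff (Suc n) P) i))\<^sup>2 \<le> ((1 + real i) ^ k * cmod (coeff P i))\<^sup>2 / w"
    proof (cases "i \<le> n")
      case False
      then have "w \<le> (1 + real i) ^ (2*k)" unfolding w_def by (intro power_mono) auto
      then have "1 * (cmod (coeff P i))\<^sup>2 \<le> ((1 + real i) ^ (2*k) / w) * (cmod (coeff P i))\<^sup>2"
        using w by (intro mult_right_mono) auto
      then show ?thesis
        using False by (simp add: coeff_poly_cutoff power_mult_distrib power_mult[symmetric] mult.commute[of k])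
    qed (use w in \<open>simp add: coeff_poly_cutoff\<close>)
  qed
  also have "\<dots> = (wnorm k P)\<^sup>2 / w"
    unfolding wnorm_def wnorm_upto_def L2_set_def by (simp add: sum_divide_distrib sum_nonneg)
  finally show ?thesis unfolding w_def by simp
qed

lemma sum_inverse_squares_le: "(\<Sum>i\<le>N. 1 / (1 + real i)\<^sup>2) \<le> 2 - 1 / (1 + real N)"
proof (induction N)
  case 0
  then show ?case by simp
next
  case (Suc N)
  define a where "a = 1 + real N"
  have a0: "a > 0" unfolding a_def by simp
  have "a * (a + 1) \<le> (a + 1) * (a + 1)" using a0 by (intro mult_right_mono) auto
  then have "a * (a + 1) \<le> (a + 1)\<^sup>2" by (simp add: power2_eq_square)
  then have "1 / (a + 1)\<^sup>2 \<le> 1 / (a * (a + 1))"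
    using a0 by (intro divide_left_mono) (auto intro: mult_pos_pos simp: add_pos_pos)
  also have "\<dots> = 1 / a - 1 / (a + 1)" using a0 by (simp add: field_simps)
  finally have "1 / (1 + real (Suc N))\<^sup>2 \<le> 1 / (1 + real N) - 1 / (1 + real (Suc N))"
    unfolding a_def by (simp add: add.commute)
  then show ?case using Suc by simp
qed

lemma l1norm_le_wnorm:
  assumes k: "k \<ge> 1"
  shows "l1norm P \<le> sqrt 2 * wnorm k P"
proof -
  define N where "N = degree P"
  have "l1norm P = (\<Sum>i\<le>N. \<bar>1 / (1 + real i) ^ k\<bar> * \<bar>(1 + real i) ^ k * cmod (coeff P i)\<bar>)"
    unfolding l1norm_def l1norm_upto_def N_def by (intro sum.cong refl) (simp add: field_simps)
  also have "\<dots> \<le> L2_set (\<lambda>i. 1 / (1 + real i) ^ k) {..N} * wnorm_upto k N P"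
    unfolding wnorm_upto_def by (rule L2_set_mult_ineq)
  also have "L2_set (\<lambda>i. 1 / (1 + real i) ^ k) {..N} \<le> sqrt 2"
  proof -
    have "(\<Sum>i\<le>N. (1 / (1 + real i) ^ k)\<^sup>2) \<le> (\<Sum>i\<le>N. 1 / (1 + real i)\<^sup>2)"
    proof (rule sum_mono)
      fix i
      have "(1 + real i)\<^sup>2 \<le> ((1 + real i) ^ k)\<^sup>2"
        using k by (intro power_mono) (auto intro: power_increasing[of 1 k "1 + real i", simplified])
      then show "(1 / (1 + real i) ^ k)\<^sup>2 \<le> 1 / (1 + real i)\<^sup>2"
        by (simp add: power_divide divide_simps)
    qed
    also have "\<dots> \<le> 2" using sum_inverse_squares_le[of N] by (smt (verit) divide_nonneg_nonneg of_nat_0_le_iff)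
    finally show ?thesis unfolding L2_set_def by simp
  qed
  finally show ?thesis
    using wnorm_nonneg[of k P] unfolding wnorm_def N_def
    by (smt (verit) mult_right_mono wnorm_def wnorm_upto_def L2_set_nonneg)
qed

lemma Cauchy_Schwarz_weighted:
  fixes x y :: "'a \<Rightarrow> real"
  assumes "\<And>i. i \<in> I \<Longrightarrow> y i \<ge> 0"
  shows "(\<Sum>i\<in>I. x i * y i)\<^sup>2 \<le> (\<Sum>i\<in>I. (x i)\<^sup>2 * y i) * (\<Sum>i\<in>I. y i)"
proof -
  have "(\<Sum>i\<in>I. x i * y i) = (\<Sum>i\<in>I. (x i * sqrt (y i)) * sqrt (y i))"
    using assms by (intro sum.cong refl) (simp add: mult.assoc)
  then have "(\<Sum>i\<in>I. x i * y i)\<^sup>2 \<le> (\<Sum>i\<in>I. (x i * sqrt (y i))\<^sup>2) * (\<Sum>i\<in>I. (sqrt (y i))\<^sup>2)"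
    using Cauchy_Schwarz_ineq_sum[of "\<lambda>i. x i * sqrt (y i)" "\<lambda>i. sqrt (y i)" I] by simp
  also have "(\<Sum>i\<in>I. (x i * sqrt (y i))\<^sup>2) = (\<Sum>i\<in>I. (x i)\<^sup>2 * y i)"
    using assms by (intro sum.cong refl) (simp add: power_mult_distrib)
  also have "(\<Sum>i\<in>I. (sqrt (y i))\<^sup>2) = (\<Sum>i\<in>I. y i)"
    using assms by (intro sum.cong refl) simp
  finally show ?thesis .
qed

lemma sum_reflect_le:
  fixes y :: "nat \<Rightarrow> real"
  assumes "\<And>j. y j \<ge> 0" "m \<le> N"
  shows "(\<Sum>i\<le>m. y (m - i)) \<le> (\<Sum>j\<le>N. y j)"
proof -
  have "(\<Sum>i\<le>m. y (m - i)) = (\<Sum>j\<in>(\<lambda>i. m - i) ` {..m}. y j)"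
    by (subst sum.reindex) (auto simp: inj_on_def)
  also have "\<dots> \<le> (\<Sum>j\<le>N. y j)"
    using assms by (intro sum_mono2) auto
  finally show ?thesis .
qed

lemma sum_triangle_le_sum_square:
  fixes g :: "nat \<Rightarrow> nat \<Rightarrow> real"
  assumes "\<And>i j. g i j \<ge> 0"
  shows "(\<Sum>m\<le>N. \<Sum>i\<le>m. g i (m - i)) \<le> (\<Sum>i\<le>N. \<Sum>j\<le>N. g i j)"
proof -
  have "(\<Sum>m\<le>N. \<Sum>i\<le>m. g i (m - i)) = (\<Sum>(i,j)\<in>{(i,j). i+j \<le> N}. g i j)"
    by (rule sum.triangle_reindex_eq[symmetric])
  also have "\<dots> \<le> (\<Sum>(i,j)\<in>{..N} \<times> {..N}. g i j)"
    using assms by (intro sum_mono2) auto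
  also have "\<dots> = (\<Sum>i\<le>N. \<Sum>j\<le>N. g i j)"
    by (simp add: sum.cartesian_product)
  finally show ?thesis .
qed

lemma L2_set_convolution_le_left:
  fixes x y :: "nat \<Rightarrow> real"
  assumes x: "\<And>i. x i \<ge> 0" and y: "\<And>j. y j \<ge> 0"
  shows "L2_set (\<lambda>m. \<Sum>i\<le>m. x i * y (m - i)) {..N} \<le> L2_set x {..N} * (\<Sum>j\<le>N. y j)"
proof -
  define Y where "Y = (\<Sum>j\<le>N. y j)"
  have Y0: "Y \<ge> 0" unfolding Y_def using y by (simp add: sum_nonneg)
  have "(\<Sum>m\<le>N. (\<Sum>i\<le>m. x i * y (m - i))\<^sup>2) \<le> (\<Sum>m\<le>N. (\<Sum>i\<le>m. (x i)\<^sup>2 * y (m - i)) * Y)"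
  proof (rule sum_mono)
    fix m assume m: "m \<in> {..N}"
    have "(\<Sum>i\<le>m. x i * y (m - i))\<^sup>2 \<le> (\<Sum>i\<le>m. (x i)\<^sup>2 * y (m - i)) * (\<Sum>i\<le>m. y (m - i))"
      using y by (intro Cauchy_Schwarz_weighted) auto
    also have "\<dots> \<le> (\<Sum>i\<le>m. (x i)\<^sup>2 * y (m - i)) * Y"
      unfolding Y_def using m y by (intro mult_left_mono sum_reflect_le sum_nonneg) auto
    finally show "(\<Sum>i\<le>m. x i * y (m - i))\<^sup>2 \<le> (\<Sum>i\<le>m. (x i)\<^sup>2 * y (m - i)) * Y" .
  qed
  also have "\<dots> = (\<Sum>m\<le>N. \<Sum>i\<le>m. (x i)\<^sup>2 * y (m - i)) * Y" by (simp add: sum_distrib_right)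
  also have "\<dots> \<le> (\<Sum>i\<le>N. \<Sum>j\<le>N. (x i)\<^sup>2 * y j) * Y"
    using y Y0 by (intro mult_right_mono sum_triangle_le_sum_square) auto
  also have "(\<Sum>i\<le>N. \<Sum>j\<le>N. (x i)\<^sup>2 * y j) = (\<Sum>i\<le>N. (x i)\<^sup>2) * Y"
    unfolding Y_def sum_product ..
  finally have "(\<Sum>m\<le>N. (\<Sum>i\<le>m. x i * y (m - i))\<^sup>2) \<le> (\<Sum>i\<le>N. (x i)\<^sup>2) * Y\<^sup>2"
    by (simp add: power2_eq_square mult.assoc)
  then have "sqrt (\<Sum>m\<le>N. (\<Sum>i\<le>m. x i * y (m - i))\<^sup>2) \<le> sqrt ((\<Sum>i\<le>N. (x i)\<^sup>2) * Y\<^sup>2)"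
    by (rule real_sqrt_le_mono)
  also have "\<dots> = sqrt (\<Sum>i\<le>N. (x i)\<^sup>2) * Y" using Y0 by (simp add: real_sqrt_mult)
  finally show ?thesis unfolding L2_set_def Y_def .
qed

lemma L2_set_convolution_le_right:
  fixes x y :: "nat \<Rightarrow> real"
  assumes x: "\<And>i. x i \<ge> 0" and y: "\<And>j. y j \<ge> 0"
  shows "L2_set (\<lambda>m. \<Sum>i\<le>m. x i * y (m - i)) {..N} \<le> (\<Sum>i\<le>N. x i) * L2_set y {..N}"
proof -
  define X where "X = (\<Sum>i\<le>N. x i)"
  have X0: "X \<ge> 0" unfolding X_def using x by (simp add: sum_nonneg)
  have "(\<Sum>m\<le>N. (\<Sum>i\<le>m. x i * y (m - i))\<^sup>2) \<le> (\<Sum>m\<le>N. (\<Sum>i\<le>m. (y (m - i))\<^sup>2 * x i) * X)"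
  proof (rule sum_mono)
    fix m assume m: "m \<in> {..N}"
    have "(\<Sum>i\<le>m. x i * y (m - i))\<^sup>2 = (\<Sum>i\<le>m. y (m - i) * x i)\<^sup>2" by (simp add: mult.commute)
    also have "\<dots> \<le> (\<Sum>i\<le>m. (y (m - i))\<^sup>2 * x i) * (\<Sum>i\<le>m. x i)"
      using x by (intro Cauchy_Schwarz_weighted) auto
    also have "\<dots> \<le> (\<Sum>i\<le>m. (y (m - i))\<^sup>2 * x i) * X"
      unfolding X_def using m x by (intro mult_left_mono sum_mono2 sum_nonneg) auto
    finally show "(\<Sum>i\<le>m. x i * y (m - i))\<^sup>2 \<le> (\<Sum>i\<le>m. (y (m - i))\<^sup>2 * x i) * X" .
  qed
  also have "\<dots> = (\<Sum>m\<le>N. \<Sum>i\<le>m. (y (m - i))\<^sup>2 * x i) * X" by (simp add: sum_distrib_right)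
  also have "\<dots> \<le> (\<Sum>i\<le>N. \<Sum>j\<le>N. (y j)\<^sup>2 * x i) * X"
    using x X0 by (intro mult_right_mono sum_triangle_le_sum_square[where g = "\<lambda>i j. (y j)\<^sup>2 * x i"]) auto
  also have "(\<Sum>i\<le>N. \<Sum>j\<le>N. (y j)\<^sup>2 * x i) = (\<Sum>j\<le>N. (y j)\<^sup>2) * X"
    unfolding X_def sum_product by (subst sum.swap) (simp add: mult.commute)
  finally have "(\<Sum>m\<le>N. (\<Sum>i\<le>m. x i * y (m - i))\<^sup>2) \<le> X\<^sup>2 * (\<Sum>j\<le>N. (y j)\<^sup>2)"
    by (simp add: power2_eq_square mult_ac)
  then have "sqrt (\<Sum>m\<le>N. (\<Sum>i\<le>m. x i * y (m - i))\<^sup>2) \<le> sqrt (X\<^sup>2 * (\<Sum>j\<le>N. (y j)\<^sup>2))"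
    by (rule real_sqrt_le_mono)
  also have "\<dots> = X * sqrt (\<Sum>j\<le>N. (y j)\<^sup>2)" using X0 by (simp add: real_sqrt_mult)
  finally show ?thesis unfolding L2_set_def X_def .
qed

lemma one_plus_power_le_split:
  assumes "i \<le> m"
  shows "(1 + real m) ^ k \<le> 2 ^ k * ((1 + real i) ^ k + (1 + real (m - i)) ^ k)"
proof -
  define a where "a = 1 + real i"
  define b where "b = 1 + real (m - i)"
  have a0: "a \<ge> 0" and b0: "b \<ge> 0" unfolding a_def b_def by auto
  have "a + b = 2 + real m" unfolding a_def b_def using assms by (simp add: of_nat_diff)
  moreover have "a \<le> max a b" "b \<le> max a b" by auto
  ultimately have "1 + real m \<le> 2 * max a b" by linarith
  then have "(1 + real m) ^ k \<le> (2 * max a b) ^ k" by (intro power_mono) auto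
  also have "\<dots> = 2 ^ k * (max a b) ^ k" by (simp add: power_mult_distrib)
  also have "(max a b) ^ k \<le> a ^ k + b ^ k"
    using a0 b0 by (cases "a \<le> b") (auto simp: max_def)
  finally show ?thesis unfolding a_def b_def by (simp add: mult_left_mono)
qed

lemma weighted_coeff_mult_le:
  fixes P Q :: "complex poly" and k :: nat
  defines "a \<equiv> \<lambda>i. cmod (coeff P i)" and "b \<equiv> \<lambda>i. cmod (coeff Q i)" and "w \<equiv> \<lambda>i::nat. (1 + real i) ^ k"
  shows "w m * cmod (coeff (P * Q) m)
           \<le> 2 ^ k * ((\<Sum>i\<le>m. (w i * a i) * b (m - i)) + (\<Sum>i\<le>m. a i * (w (m - i) * b (m - i))))"
proof -
  have "cmod (coeff (P * Q) m) \<le> (\<Sum>i\<le>m. a i * b (m - i))"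
    unfolding coeff_mult a_def b_def by (rule order_trans[OF norm_sum]) (simp add: norm_mult)
  then have "w m * cmod (coeff (P * Q) m) \<le> (\<Sum>i\<le>m. w m * (a i * b (m - i)))"
    unfolding sum_distrib_left[symmetric] w_def by (rule mult_left_mono) simp
  also have "\<dots> \<le> (\<Sum>i\<le>m. 2 ^ k * ((w i * a i) * b (m - i) + a i * (w (m - i) * b (m - i))))"
  proof (rule sum_mono)
    fix i assume "i \<in> {..m}"
    then have "w m \<le> 2 ^ k * (w i + w (m - i))" unfolding w_def by (intro one_plus_power_le_split) auto
    then have "w m * (a i * b (m - i)) \<le> 2 ^ k * (w i + w (m - i)) * (a i * b (m - i))"
      unfolding a_def b_def by (intro mult_right_mono) auto
    then show "w m * (a i * b (m - i)) \<le> 2 ^ k * ((w i * a i) * b (m - i) + a i * (w (m - i) * b (m - i)))"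
      by (simp add: algebra_simps)
  qed
  finally show ?thesis by (simp add: sum_distrib_left sum.distrib distrib_left)
qed

lemma wnorm_mult_le: "wnorm k (P * Q) \<le> 2 ^ k * (wnorm k P * l1norm Q + l1norm P * wnorm k Q)"
proof -
  define N where "N = degree P + degree Q"
  have dP: "degree P \<le> N" and dQ: "degree Q \<le> N" and dPQ: "degree (P * Q) \<le> N"
    unfolding N_def by (auto intro: degree_mult_le)
  define a where "a = (\<lambda>i. cmod (coeff P i))"
  define b where "b = (\<lambda>i. cmod (coeff Q i))"
  define w where "w = (\<lambda>i::nat. (1 + real i) ^ k)"
  have a0: "\<And>i. a i \<ge> 0" and b0: "\<And>i. b i \<ge> 0" and w0: "\<And>i. w i \<ge> 0"
    unfolding a_def b_def w_def by auto
  define X where "X = (\<lambda>m. \<Sum>i\<le>m. (w i * a i) * b (m - i))"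
  define Y where "Y = (\<lambda>m. \<Sum>i\<le>m. a i * (w (m - i) * b (m - i)))"
  have "wnorm_upto k N (P * Q) \<le> L2_set (\<lambda>m. 2 ^ k * (X m + Y m)) {..N}"
    unfolding wnorm_upto_def X_def Y_def a_def b_def w_def
    by (rule L2_set_mono) (use weighted_coeff_mult_le in auto)
  also have "\<dots> = 2 ^ k * L2_set (\<lambda>m. X m + Y m) {..N}"
    by (rule L2_set_right_distrib[symmetric]) simp
  also have "L2_set (\<lambda>m. X m + Y m) {..N} \<le> L2_set X {..N} + L2_set Y {..N}"
    by (rule L2_set_triangle_ineq)
  also have "L2_set X {..N} \<le> L2_set (\<lambda>i. w i * a i) {..N} * (\<Sum>j\<le>N. b j)"
    unfolding X_def using a0 b0 w0 by (intro L2_set_convolution_le_left) auto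
  also have "L2_set Y {..N} \<le> (\<Sum>i\<le>N. a i) * L2_set (\<lambda>j. w j * b j) {..N}"
    unfolding Y_def using a0 b0 w0 by (intro L2_set_convolution_le_right[where y = "\<lambda>j. w j * b j"]) auto
  also have "L2_set (\<lambda>i. w i * a i) {..N} = wnorm k P"
    using wnorm_upto_eq[OF dP] unfolding wnorm_upto_def w_def a_def .
  also have "L2_set (\<lambda>j. w j * b j) {..N} = wnorm k Q"
    using wnorm_upto_eq[OF dQ] unfolding wnorm_upto_def w_def b_def .
  also have "(\<Sum>j\<le>N. b j) = l1norm Q" using l1norm_upto_eq[OF dQ] unfolding l1norm_upto_def b_def .
  also have "(\<Sum>i\<le>N. a i) = l1norm P" using l1norm_upto_eq[OF dP] unfolding l1norm_upto_def a_def .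
  finally show ?thesis using wnorm_upto_eq[OF dPQ] by (simp add: mult_left_mono)
qed

lemma wnorm_mult_le_wnorm:
  assumes k: "k \<ge> 1"
  shows "wnorm k (P * Q) \<le> 2 ^ (k+2) * wnorm k P * wnorm k Q"
proof -
  have "wnorm k (P * Q) \<le> 2 ^ k * (wnorm k P * l1norm Q + l1norm P * wnorm k Q)" by (rule wnorm_mult_le)
  also have "\<dots> \<le> 2 ^ k * (wnorm k P * (sqrt 2 * wnorm k Q) + (sqrt 2 * wnorm k P) * wnorm k Q)"
    using l1norm_le_wnorm[OF k, of P] l1norm_le_wnorm[OF k, of Q] wnorm_nonneg[of k P] wnorm_nonneg[of k Q]
    by (intro mult_left_mono add_mono mult_left_mono mult_right_mono) auto
  also have "\<dots> = 2 ^ k * (2 * sqrt 2) * wnorm k P * wnorm k Q" by (simp add: algebra_simps)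
  also have "\<dots> \<le> 2 ^ k * 4 * wnorm k P * wnorm k Q"
  proof -
    have "sqrt 2 \<le> 2" using sqrt2_less_2 by simp
    then have "2 * sqrt 2 \<le> (4::real)" by simp
    then show ?thesis using wnorm_nonneg[of k P] wnorm_nonneg[of k Q]
      by (intro mult_right_mono mult_left_mono) auto
  qed
  finally show ?thesis by (simp add: power_add)
qed

lemma wnorm_power_le:
  assumes k: "k \<ge> 1"
  shows "wnorm k (H ^ l) \<le> (2 ^ (k+2)) ^ l * (wnorm k H) ^ l"
proof (induction l)
  case 0
  then show ?case by simp
next
  case (Suc l)
  have "wnorm k (H ^ Suc l) = wnorm k (H * H ^ l)" by simp
  also have "\<dots> \<le> 2 ^ (k+2) * wnorm k H * wnorm k (H ^ l)" by (rule wnorm_mult_le_wnorm[OF k])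
  also have "\<dots> \<le> 2 ^ (k+2) * wnorm k H * ((2 ^ (k+2)) ^ l * (wnorm k H) ^ l)"
    using Suc wnorm_nonneg[of k H] by (intro mult_left_mono) auto
  finally show ?case by (simp add: algebra_simps)
qed

definition exp_trunc_poly :: "nat \<Rightarrow> complex poly \<Rightarrow> complex poly" where
  "exp_trunc_poly L H = (\<Sum>l\<le>L. smult (complex_of_real (inverse (fact l))) (H ^ l))"

lemma exp_partial_sum_le: "t \<ge> 0 \<Longrightarrow> (\<Sum>l\<le>L. t ^ l / fact l) \<le> exp (t::real)"
proof -
  assume t: "t \<ge> 0"
  have s: "summable (\<lambda>n. t ^ n /\<^sub>R fact n)" by (rule summable_exp_generic)
  have "(\<Sum>l\<le>L. t ^ l /\<^sub>R fact l) \<le> (\<Sum>n. t ^ n /\<^sub>R fact n)"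
    by (rule sum_le_suminf[OF s]) (use t in auto)
  then show ?thesis by (simp add: exp_def divide_inverse mult.commute)
qed

lemma wnorm_exp_trunc_poly_le:
  assumes k: "k \<ge> 1"
  shows "wnorm k (exp_trunc_poly L H) \<le> exp (2 ^ (k+2) * wnorm k H)"
proof -
  have "wnorm k (exp_trunc_poly L H) \<le> (\<Sum>l\<le>L. wnorm k (smult (complex_of_real (inverse (fact l))) (H ^ l)))"
    unfolding exp_trunc_poly_def by (rule wnorm_sum_le) simp
  also have "\<dots> = (\<Sum>l\<le>L. inverse (fact l) * wnorm k (H ^ l))"
    by (intro sum.cong refl, simp only: wnorm_smult norm_of_real abs_inverse, simp)
  also have "\<dots> \<le> (\<Sum>l\<le>L. (2 ^ (k+2) * wnorm k H) ^ l / fact l)"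
  proof (rule sum_mono)
    fix l
    have "inverse (fact l) * wnorm k (H ^ l) \<le> inverse (fact l) * ((2 ^ (k+2)) ^ l * (wnorm k H) ^ l)"
      using wnorm_power_le[OF k, of H l] by (intro mult_left_mono) auto
    then show "inverse (fact l) * wnorm k (H ^ l) \<le> (2 ^ (k+2) * wnorm k H) ^ l / fact l"
      by (simp add: power_mult_distrib divide_inverse mult.commute)
  qed
  also have "\<dots> \<le> exp (2 ^ (k+2) * wnorm k H)"
    using wnorm_nonneg[of k H] by (intro exp_partial_sum_le) auto
  finally show ?thesis .
qed

lemma coeff_0_exp_trunc_poly:
  assumes "coeff H 0 = 0"
  shows "coeff (exp_trunc_poly L H) 0 = 1"
proof -
  have "coeff (exp_trunc_poly L H) 0 = (\<Sum>l\<le>L. complex_of_real (inverse (fact l)) * (coeff H 0) ^ l)"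
    unfolding exp_trunc_poly_def by (simp add: coeff_sum coeff_0_power)
  also have "\<dots> = (\<Sum>l\<le>L. if l = 0 then 1 else 0)"
    using assms by (intro sum.cong refl) auto
  also have "\<dots> = 1" by simp
  finally show ?thesis .
qed

lemma poly_exp_trunc_poly: "poly (exp_trunc_poly L H) z = (\<Sum>l\<le>L. (poly H z) ^ l /\<^sub>R fact l)"
  unfolding exp_trunc_poly_def by (simp add: poly_sum scaleR_conv_of_real)

lemma norm_exp_remainder_le:
  fixes w :: complex
  assumes "cmod w \<le> R"
  shows "cmod (exp w - (\<Sum>l\<le>L. w ^ l /\<^sub>R fact l)) \<le> exp R - (\<Sum>l\<le>L. R ^ l /\<^sub>R fact l)"
proof -
  have R0: "R \<ge> 0" using assms norm_ge_zero order_trans by blast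
  have sw: "summable (\<lambda>n. w ^ n /\<^sub>R fact n)" by (rule summable_exp_generic)
  have sR: "summable (\<lambda>n. R ^ n /\<^sub>R fact n)" by (rule summable_exp_generic)
  have "exp w - (\<Sum>l\<le>L. w ^ l /\<^sub>R fact l) = (\<Sum>n. w ^ (n + Suc L) /\<^sub>R fact (n + Suc L))"
    unfolding exp_def using suminf_minus_initial_segment[OF sw, of "Suc L"]
    by (simp add: lessThan_Suc_atMost)
  moreover have "exp R - (\<Sum>l\<le>L. R ^ l /\<^sub>R fact l) = (\<Sum>n. R ^ (n + Suc L) /\<^sub>R fact (n + Suc L))"
    unfolding exp_def using suminf_minus_initial_segment[OF sR, of "Suc L"]
    by (simp add: lessThan_Suc_atMost)
  moreover have "cmod (\<Sum>n. w ^ (n + Suc L) /\<^sub>R fact (n + Suc L)) \<le> (\<Sum>n. R ^ (n + Suc L) /\<^sub>R fact (n + Suc L))"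
  proof (rule norm_suminf_le)
    fix n
    have "cmod (w ^ (n + Suc L)) \<le> R ^ (n + Suc L)"
      unfolding norm_power by (rule power_mono[OF assms norm_ge_zero])
    then show "cmod (w ^ (n + Suc L) /\<^sub>R fact (n + Suc L)) \<le> R ^ (n + Suc L) /\<^sub>R fact (n + Suc L)"
      by (simp add: divide_right_mono)
  next
    show "summable (\<lambda>n. R ^ (n + Suc L) /\<^sub>R fact (n + Suc L))"
      by (rule summable_ignore_initial_segment[OF sR])
  qed
  ultimately show ?thesis by simp
qed

lemma exp_remainder_tendsto_0: "(\<lambda>L. exp R - (\<Sum>l\<le>L. R ^ l /\<^sub>R fact l)) \<longlonglongrightarrow> (0::real)"
proof -
  have "(\<lambda>n. \<Sum>i<n. R ^ i /\<^sub>R fact i) \<longlonglongrightarrow> exp R"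
    using exp_converges[of R] unfolding sums_def .
  then have "(\<lambda>L. \<Sum>i<Suc L. R ^ i /\<^sub>R fact i) \<longlonglongrightarrow> exp R"
    by (rule LIMSEQ_Suc)
  then have "(\<lambda>L. \<Sum>i\<le>L. R ^ i /\<^sub>R fact i) \<longlonglongrightarrow> exp R"
    by (simp add: lessThan_Suc_atMost)
  then have "(\<lambda>L. exp R - (\<Sum>l\<le>L. R ^ l /\<^sub>R fact l)) \<longlonglongrightarrow> exp R - exp R"
    by (intro tendsto_intros)
  then show ?thesis by simp
qed

section \<open>The extremal property of orthonormal polynomials\<close>

lemma circ_inner_integrable:
  assumes "continuous_on {-pi..pi} \<phi>"
  shows "(\<lambda>\<theta>. poly f (cis \<theta>) * cnj (poly g (cis \<theta>)) * complex_of_real (\<phi> \<theta>)) integrable_on {-pi..pi}"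
  by (intro integrable_continuous_interval continuous_intros continuous_on_compose2[OF continuous_on_of_real] assms)
     (auto intro: continuous_on_subset[OF continuous_on_of_real])

lemma circ_inner_add_left:
  assumes "continuous_on {-pi..pi} \<phi>"
  shows "circ_inner \<phi> (f1 + f2) g = circ_inner \<phi> f1 g + circ_inner \<phi> f2 g"
proof -
  define F1 where "F1 = (\<lambda>\<theta>. poly f1 (cis \<theta>) * cnj (poly g (cis \<theta>)) * complex_of_real (\<phi> \<theta>))"
  define F2 where "F2 = (\<lambda>\<theta>. poly f2 (cis \<theta>) * cnj (poly g (cis \<theta>)) * complex_of_real (\<phi> \<theta>))"
  have e: "(\<lambda>\<theta>. poly (f1 + f2) (cis \<theta>) * cnj (poly g (cis \<theta>)) * complex_of_real (\<phi> \<theta>)) = (\<lambda>\<theta>. F1 \<theta> + F2 \<theta>)"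
    unfolding F1_def F2_def by (rule ext) (simp add: algebra_simps)
  have i: "integral {-pi..pi} (\<lambda>\<theta>. F1 \<theta> + F2 \<theta>) = integral {-pi..pi} F1 + integral {-pi..pi} F2"
    unfolding F1_def F2_def by (intro integral_add circ_inner_integrable[OF assms])
  show ?thesis unfolding circ_inner_def e i unfolding F1_def F2_def by (simp add: distrib_left)
qed

lemma circ_inner_smult_left:
  shows "circ_inner \<phi> (smult c f) g = c * circ_inner \<phi> f g"
proof -
  have "circ_inner \<phi> (smult c f) g = complex_of_real (1 / (2 * pi)) * integral {-pi..pi}
     (\<lambda>\<theta>. c * (poly f (cis \<theta>) * cnj (poly g (cis \<theta>)) * complex_of_real (\<phi> \<theta>)))"
    unfolding circ_inner_def by (simp add: algebra_simps)
  also have "\<dots> = c * circ_inner \<phi> f g"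
    unfolding circ_inner_def by (simp only: integral_mult_right) (simp add: algebra_simps)
  finally show ?thesis .
qed

lemma circ_inner_0_left [simp]: "circ_inner \<phi> 0 g = 0"
  unfolding circ_inner_def by simp

lemma circ_inner_commute: "circ_inner \<phi> f g = cnj (circ_inner \<phi> g f)"
  unfolding circ_inner_def
  by (simp add: integral_cnj mult.commute mult.left_commute)

definition circ_norm_sq :: "(real \<Rightarrow> real) \<Rightarrow> complex poly \<Rightarrow> real" where
  "circ_norm_sq \<phi> Q = (1 / (2 * pi)) * integral {-pi..pi} (\<lambda>\<theta>. (cmod (poly Q (cis \<theta>)))\<^sup>2 * \<phi> \<theta>)"

lemma circ_inner_self:
  assumes "continuous_on {-pi..pi} \<phi>"
  shows "circ_inner \<phi> Q Q = complex_of_real (circ_norm_sq \<phi> Q)"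
proof -
  have "(\<lambda>\<theta>. poly Q (cis \<theta>) * cnj (poly Q (cis \<theta>)) * complex_of_real (\<phi> \<theta>))
      = (\<lambda>\<theta>. complex_of_real ((cmod (poly Q (cis \<theta>)))\<^sup>2 * \<phi> \<theta>))"
    by (rule ext) (simp only: complex_norm_square[symmetric] of_real_mult)
  moreover have "integral {-pi..pi} (\<lambda>\<theta>. complex_of_real ((cmod (poly Q (cis \<theta>)))\<^sup>2 * \<phi> \<theta>))
      = complex_of_real (integral {-pi..pi} (\<lambda>\<theta>. (cmod (poly Q (cis \<theta>)))\<^sup>2 * \<phi> \<theta>))"
    by (intro integral_unique has_integral_of_real integrable_integral integrable_continuous_interval
        continuous_intros assms)
  ultimately show ?thesis unfolding circ_inner_def circ_norm_sq_def by simp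
qed

lemma circ_norm_sq_nonneg:
  assumes "continuous_on {-pi..pi} \<phi>" "\<And>\<theta>. \<phi> \<theta> > 0"
  shows "circ_norm_sq \<phi> Q \<ge> 0"
  unfolding circ_norm_sq_def using assms
  by (intro mult_nonneg_nonneg integral_nonneg integrable_continuous_interval continuous_intros)
     (auto intro: less_imp_le)

lemma circ_inner_orthonormal_lower_degree:
  fixes p :: "nat \<Rightarrow> complex poly"
  assumes cont: "continuous_on {-pi..pi} \<phi>"
    and deg: "\<And>n. degree (p n) = n"
    and lead: "\<And>n. lead_coeff (p n) \<noteq> 0"
    and orth: "\<And>m n. circ_inner \<phi> (p m) (p n) = (if m = n then 1 else 0)"
  shows "R = 0 \<or> degree R < n \<Longrightarrow> circ_inner \<phi> R (p n) = 0"
proof (induction "degree R" arbitrary: R rule: less_induct)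
  case less
  show ?case
  proof (cases "R = 0")
    case True
    then show ?thesis by simp
  next
    case False
    define d where "d = degree R"
    have dn: "d < n" using less.prems False unfolding d_def by auto
    define c where "c = lead_coeff R / lead_coeff (p d)"
    define R' where "R' = R - smult c (p d)"
    have cR': "coeff R' d = 0" unfolding R'_def c_def d_def using lead[of "degree R"] deg[of "degree R"]
      by simp
    have dR': "degree R' \<le> d" unfolding R'_def d_def using deg[of "degree R"]
      by (intro degree_diff_le) (auto intro: order_trans[OF degree_smult_le])
    have R'case: "R' = 0 \<or> degree R' < d"
    proof (cases "R' = 0")
      case False
      then have "degree R' \<noteq> d" using cR' by (metis leading_coeff_0_iff)
      then show ?thesis using dR' by simp
    qed simp
    have IH: "circ_inner \<phi> R' (p n) = 0"
    proof (cases "R' = 0")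
      case True
      then show ?thesis by simp
    next
      case False
      then have "degree R' < degree R" using R'case unfolding d_def by simp
      moreover have "R' = 0 \<or> degree R' < n" using R'case dn by auto
      ultimately show ?thesis using less.hyps by blast
    qed
    have "R = smult c (p d) + R'" unfolding R'_def by simp
    then have "circ_inner \<phi> R (p n) = c * circ_inner \<phi> (p d) (p n) + circ_inner \<phi> R' (p n)"
      by (simp add: circ_inner_add_left[OF cont] circ_inner_smult_left)
    also have "\<dots> = 0" using orth[of d n] dn IH by simp
    finally show ?thesis .
  qed
qed

lemma circ_norm_sq_add_orthogonal:
  assumes cont: "continuous_on {-pi..pi} \<phi>" and orth: "circ_inner \<phi> P R = 0"
  shows "circ_norm_sq \<phi> (P + R) = circ_norm_sq \<phi> P + circ_norm_sq \<phi> R"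
proof -
  have "circ_inner \<phi> (P + R) (P + R) = circ_inner \<phi> P (P + R) + circ_inner \<phi> R (P + R)"
    by (rule circ_inner_add_left[OF cont])
  also have "circ_inner \<phi> P (P + R) = cnj (circ_inner \<phi> (P + R) P)" by (rule circ_inner_commute)
  also have "circ_inner \<phi> (P + R) P = circ_inner \<phi> P P + circ_inner \<phi> R P"
    by (rule circ_inner_add_left[OF cont])
  also have "circ_inner \<phi> R (P + R) = cnj (circ_inner \<phi> (P + R) R)" by (rule circ_inner_commute)
  also have "circ_inner \<phi> (P + R) R = circ_inner \<phi> P R + circ_inner \<phi> R R"
    by (rule circ_inner_add_left[OF cont])
  finally have "circ_inner \<phi> (P + R) (P + R) = circ_inner \<phi> P P + circ_inner \<phi> R R"
    using orth circ_inner_commute[of \<phi> R P] circ_inner_self[OF cont] by simp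
  then show ?thesis using circ_inner_self[OF cont] by (metis of_real_add of_real_eq_iff)
qed

lemma inverse_lead_coeff_sq_le_circ_norm_sq:
  fixes p :: "nat \<Rightarrow> complex poly" and Q :: "complex poly"
  assumes cont: "continuous_on {-pi..pi} \<phi>" and pos: "\<And>\<theta>. \<phi> \<theta> > 0"
    and deg: "\<And>n. degree (p n) = n"
    and lead_pos: "\<And>n. Im (lead_coeff (p n)) = 0 \<and> Re (lead_coeff (p n)) > 0"
    and orth: "\<And>m n. circ_inner \<phi> (p m) (p n) = (if m = n then 1 else 0)"
    and Qd: "degree Q = n" and Qm: "lead_coeff Q = 1"
  shows "1 / (Re (lead_coeff (p n)))\<^sup>2 \<le> circ_norm_sq \<phi> Q"
proof -
  define \<kappa> where "\<kappa> = Re (lead_coeff (p n))"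
  have \<kappa>: "\<kappa> > 0" "lead_coeff (p n) = complex_of_real \<kappa>"
    unfolding \<kappa>_def using lead_pos[of n] by (auto simp: complex_eq_iff)
  define P where "P = smult (complex_of_real (1/\<kappa>)) (p n)"
  define R where "R = Q - P"
  have dP: "degree P = n" unfolding P_def using \<kappa> deg by simp
  have "R = 0 \<or> degree R < n"
  proof (cases "R = 0")
    case False
    have "coeff R n = 0" unfolding R_def using Qm Qd dP \<kappa> deg[of n] by (simp add: P_def)
    moreover have "degree R \<le> n" unfolding R_def using Qd dP by (metis degree_diff_le order_refl)
    ultimately show ?thesis using False by (metis le_neq_implies_less leading_coeff_0_iff)
  qed simp
  moreover have "lead_coeff (p m) \<noteq> 0" for m using lead_pos[of m] by auto
  ultimately have "circ_inner \<phi> R (p n) = 0"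
    using circ_inner_orthonormal_lower_degree[OF cont deg _ orth] by blast
  then have PR: "circ_inner \<phi> P R = 0"
    unfolding P_def circ_inner_smult_left using circ_inner_commute[of \<phi> "p n" R] by simp
  have "circ_inner \<phi> P P = complex_of_real (1/\<kappa>) * circ_inner \<phi> (p n) P"
    unfolding P_def by (rule circ_inner_smult_left)
  also have "circ_inner \<phi> (p n) P = cnj (circ_inner \<phi> P (p n))" by (rule circ_inner_commute)
  also have "circ_inner \<phi> P (p n) = complex_of_real (1/\<kappa>) * circ_inner \<phi> (p n) (p n)"
    unfolding P_def by (rule circ_inner_smult_left)
  finally have "circ_inner \<phi> P P = complex_of_real (1 / \<kappa>\<^sup>2)"
    using orth[of n n] by (simp add: power2_eq_square)
  then have "circ_norm_sq \<phi> P = 1 / \<kappa>\<^sup>2" using circ_inner_self[OF cont, of P] by (metis of_real_eq_iff)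
  moreover have "Q = P + R" unfolding R_def by simp
  ultimately have "circ_norm_sq \<phi> Q = 1 / \<kappa>\<^sup>2 + circ_norm_sq \<phi> R"
    using circ_norm_sq_add_orthogonal[OF cont PR] by simp
  then show ?thesis using circ_norm_sq_nonneg[OF cont pos, of R] unfolding \<kappa>_def by simp
qed

(* The reversed polynomial q^*(z) = z^n conj (q (1 / conj z)): it has the same modulus as q on the
   circle and exchanges "constant coefficient 1" with "monic of degree n". *)
definition rev_cnj_poly :: "nat \<Rightarrow> complex poly \<Rightarrow> complex poly" where
  "rev_cnj_poly n q = (\<Sum>j\<le>n. monom (cnj (coeff q (n - j))) j)"

lemma coeff_rev_cnj_poly: "coeff (rev_cnj_poly n q) j = (if j \<le> n then cnj (coeff q (n - j)) else 0)"
  unfolding rev_cnj_poly_def by (simp add: coeff_sum coeff_monom)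

lemma degree_rev_cnj_poly_le: "degree (rev_cnj_poly n q) \<le> n"
  by (rule degree_le) (auto simp: coeff_rev_cnj_poly)

lemma rev_cnj_poly_monic:
  assumes "coeff q 0 = 1"
  shows "degree (rev_cnj_poly n q) = n" "lead_coeff (rev_cnj_poly n q) = 1"
proof -
  have c: "coeff (rev_cnj_poly n q) n = 1" using assms by (simp add: coeff_rev_cnj_poly)
  then have "n \<le> degree (rev_cnj_poly n q)" by (intro le_degree) simp
  then show d: "degree (rev_cnj_poly n q) = n" using degree_rev_cnj_poly_le[of n q] by simp
  show "lead_coeff (rev_cnj_poly n q) = 1" using c d by simp
qed

lemma poly_rev_cnj_poly_cis:
  assumes "degree q \<le> n"
  shows "poly (rev_cnj_poly n q) (cis \<theta>) = cis (real n * \<theta>) * cnj (poly q (cis \<theta>))"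
proof -
  have "poly (rev_cnj_poly n q) (cis \<theta>) = (\<Sum>j\<le>n. cnj (coeff q (n - j)) * cis (real j * \<theta>))"
    unfolding rev_cnj_poly_def by (simp add: poly_sum poly_monom Complex.DeMoivre)
  also have "\<dots> = (\<Sum>i\<le>n. cnj (coeff q i) * cis (real (n - i) * \<theta>))"
    using sum.atLeastAtMost_rev[of "\<lambda>j. cnj (coeff q (n - j)) * cis (real j * \<theta>)" 0 n]
    by (simp add: atLeast0AtMost)
  also have "\<dots> = (\<Sum>i\<le>n. cis (real n * \<theta>) * (cnj (coeff q i) * cis (- (real i * \<theta>))))"
  proof (intro sum.cong refl)
    fix i assume "i \<in> {..n}"
    then have "real (n - i) * \<theta> = real n * \<theta> + (- (real i * \<theta>))" by (simp add: of_nat_diff algebra_simps)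
    then have "cis (real (n - i) * \<theta>) = cis (real n * \<theta>) * cis (- (real i * \<theta>))"
      by (simp only: cis_mult)
    then show "cnj (coeff q i) * cis (real (n - i) * \<theta>) = cis (real n * \<theta>) * (cnj (coeff q i) * cis (- (real i * \<theta>)))"
      by simp
  qed
  also have "\<dots> = cis (real n * \<theta>) * cnj (\<Sum>i\<le>n. coeff q i * cis (real i * \<theta>))"
    by (simp add: sum_distrib_left cnj_sum cis_cnj)
  also have "(\<Sum>i\<le>n. coeff q i * cis (real i * \<theta>)) = poly q (cis \<theta>)"
  proof -
    have "poly q (cis \<theta>) = (\<Sum>i\<le>degree q. coeff q i * cis \<theta> ^ i)" by (simp add: poly_altdef)
    also have "\<dots> = (\<Sum>i\<le>n. coeff q i * cis \<theta> ^ i)"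
      using assms by (intro sum.mono_neutral_left) (auto simp: coeff_eq_0)
    finally show ?thesis by (simp add: Complex.DeMoivre)
  qed
  finally show ?thesis .
qed

lemma norm_poly_rev_cnj_poly_cis:
  assumes "degree q \<le> n"
  shows "cmod (poly (rev_cnj_poly n q) (cis \<theta>)) = cmod (poly q (cis \<theta>))"
  using poly_rev_cnj_poly_cis[OF assms] by (simp add: norm_mult)

section \<open>Asymptotics of the leading coefficient\<close>

lemma exp_le_quadratic:
  fixes x M :: real
  assumes "\<bar>x\<bar> \<le> M"
  shows "exp x \<le> 1 + x + exp M * x\<^sup>2"
proof -
  obtain t where t: "\<bar>t\<bar> \<le> \<bar>x\<bar>" "exp x = (\<Sum>m<2. (x ^ m) / fact m) + (exp t / fact 2) * x ^ 2"
    using Maclaurin_exp_le[of x 2] by blast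
  have "exp t \<le> exp M" using t(1) assms by simp
  moreover have "exp t > 0" by simp
  ultimately have "exp t / 2 \<le> exp M" by linarith
  then have "exp t / 2 * x\<^sup>2 \<le> exp M * x\<^sup>2"
    by (intro mult_right_mono) auto
  then show ?thesis using t(2) by (simp add: numeral_2_eq_2)
qed

lemma integral_quadratic_expansion:
  fixes s :: "real \<Rightarrow> complex" and u :: "real \<Rightarrow> real"
  assumes cs: "continuous_on {-pi..pi} s" and cu: "continuous_on {-pi..pi} u"
  shows "integral {-pi..pi} (\<lambda>\<theta>. c * (1 + 2 * Re (s \<theta>) - u \<theta> + K * ((cmod (s \<theta>))\<^sup>2 + (u \<theta>)\<^sup>2)))
    = c * (2 * pi + 2 * integral {-pi..pi} (\<lambda>\<theta>. Re (s \<theta>)) - integral {-pi..pi} u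
           + K * (integral {-pi..pi} (\<lambda>\<theta>. (cmod (s \<theta>))\<^sup>2) + integral {-pi..pi} (\<lambda>\<theta>. (u \<theta>)\<^sup>2)))"
proof -
  have int_1: "(\<lambda>\<theta>. 1 + 2 * Re (s \<theta>)) integrable_on {-pi..pi}"
    and int_2: "(\<lambda>\<theta>. 1::real) integrable_on {-pi..pi}"
    and int_3: "(\<lambda>\<theta>. 2 * Re (s \<theta>)) integrable_on {-pi..pi}"
    and int_4: "u integrable_on {-pi..pi}"
    and int_5: "(\<lambda>\<theta>. 1 + 2 * Re (s \<theta>) - u \<theta>) integrable_on {-pi..pi}"
    and int_6: "(\<lambda>\<theta>. (cmod (s \<theta>))\<^sup>2) integrable_on {-pi..pi}"
    and int_7: "(\<lambda>\<theta>. (u \<theta>)\<^sup>2) integrable_on {-pi..pi}"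
    and int_8: "(\<lambda>\<theta>. K * ((cmod (s \<theta>))\<^sup>2 + (u \<theta>)\<^sup>2)) integrable_on {-pi..pi}"
    by (intro integrable_continuous_interval continuous_intros cs cu)+
  show ?thesis
    using integral_add[OF int_5 int_8] integral_diff[OF int_1 int_4] integral_add[OF int_2 int_3]
      integral_add[OF int_6 int_7]
    by simp
qed

lemma quadratic_cross_terms_le:
  fixes a b x M c :: real
  assumes ab: "a\<^sup>2 \<le> b" and xM: "\<bar>x\<bar> \<le> M" and c: "c \<ge> 0"
  shows "(1 + 2*a + b) * (1 - x + c * x\<^sup>2)
           \<le> 1 + 2*a - x + (2 + M + c + c * M + c * M\<^sup>2) * (b + x\<^sup>2)"
proof -
  have M0: "M \<ge> 0" and b0: "b \<ge> 0" using xM ab by (auto intro: order_trans[OF zero_le_power2])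
  have "- 2*a*x \<le> a\<^sup>2 + x\<^sup>2" using zero_le_power2[of "a + x"] by (simp add: power2_eq_square algebra_simps)
  then have t1: "- 2*a*x \<le> b + x\<^sup>2" using ab by linarith
  have t2: "- b*x \<le> b*M" using xM b0 mult_left_mono[of "- x" M b] by linarith
  have "2*\<bar>a\<bar>*\<bar>x\<bar> \<le> a\<^sup>2 + x\<^sup>2"
    using zero_le_power2[of "\<bar>a\<bar> - \<bar>x\<bar>"] by (simp add: power2_eq_square algebra_simps)
  then have "(2*\<bar>a\<bar>*\<bar>x\<bar>) * \<bar>x\<bar> \<le> (b + x\<^sup>2) * M"
    using ab xM b0 by (intro mult_mono) auto
  moreover have "2*a*x\<^sup>2 \<le> (2*\<bar>a\<bar>*\<bar>x\<bar>) * \<bar>x\<bar>"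
    by (simp add: power2_eq_square abs_mult[symmetric] mult.assoc)
  ultimately have "2*a*x\<^sup>2 \<le> (b + x\<^sup>2) * M" by (rule order_trans[rotated])
  then have t3: "c * (2*a*x\<^sup>2) \<le> c * (M * (b + x\<^sup>2))"
    using mult_left_mono c by (simp add: mult.commute)
  have "x\<^sup>2 \<le> M\<^sup>2" using xM by (metis abs_le_square_iff power2_abs abs_of_nonneg M0 abs_ge_zero order_trans)
  then have t4: "c * (b*x\<^sup>2) \<le> c * (b*M\<^sup>2)" using b0 c by (intro mult_left_mono) auto
  have "(1 + 2*a + b) * (1 - x + c * x\<^sup>2)
      = 1 + 2*a - x + (b - 2*a*x - b*x + c * x\<^sup>2 + c * (2*a*x\<^sup>2) + c * (b*x\<^sup>2))"
    by (simp add: algebra_simps power2_eq_square)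
  also have "\<dots> \<le> 1 + 2*a - x + ((2 + M + c*M + c*M\<^sup>2) * b + (1 + c + c*M) * x\<^sup>2)"
    using t1 t2 t3 t4 by (simp add: algebra_simps)
  also have "\<dots> \<le> 1 + 2*a - x + (2 + M + c + c * M + c * M\<^sup>2) * (b + x\<^sup>2)"
    using b0 c M0 mult_right_mono[of "2 + M + c*M + c*M\<^sup>2" "2 + M + c + c * M + c * M\<^sup>2" b]
      mult_right_mono[of "1 + c + c*M" "2 + M + c + c * M + c * M\<^sup>2" "x\<^sup>2"]
    by (simp add: distrib_left)
  finally show ?thesis .
qed

lemma exp_neg_product_le_quadratic:
  fixes a b x M :: real
  assumes ab: "a\<^sup>2 \<le> b" and xM: "\<bar>x\<bar> \<le> M" and nonneg: "0 \<le> 1 + 2*a + b"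
  shows "(1 + 2*a + b) * exp (- x) \<le> 1 + 2*a - x + (2 + M + exp M + exp M * M + exp M * M\<^sup>2) * (b + x\<^sup>2)"
proof -
  have "(1 + 2*a + b) * exp (- x) \<le> (1 + 2*a + b) * (1 - x + exp M * x\<^sup>2)"
    using exp_le_quadratic[of "-x" M] xM nonneg by (intro mult_left_mono) auto
  also have "\<dots> \<le> 1 + 2*a - x + (2 + M + exp M + exp M * M + exp M * M\<^sup>2) * (b + x\<^sup>2)"
    by (rule quadratic_cross_terms_le[OF ab xM]) simp
  finally show ?thesis .
qed

locale szego_potential =
  fixes V :: "real \<Rightarrow> real" and k :: nat and L :: real and D :: "nat \<Rightarrow> real \<Rightarrow> real"
  assumes k: "k \<ge> 1" and per: "\<forall>x. V (x + 2*pi) = V x" and D0: "D 0 = V"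
    and Dder: "\<forall>j<k-1. \<forall>x. (D j has_real_derivative D (Suc j) x) (at x)"
    and Lip: "\<forall>x y. \<bar>D (k-1) x - D (k-1) y\<bar> \<le> L * \<bar>x - y\<bar>"
begin

definition vhat :: "int \<Rightarrow> complex" where "vhat = fourier_coeff (\<lambda>\<theta>. complex_of_real (V \<theta>))"
definition V0 :: real where "V0 = (1 / (2 * pi)) * integral {-pi..pi} V"

lemma continuous_V: "continuous_on UNIV V"
  using derivative_chain_continuous[OF Dder Lip, of 0] D0 by simp

lemma cont_pi_V: "continuous_on {-pi..pi} V"
  using continuous_V continuous_on_subset by blast

lemma lipschitz_const_nonneg: "L \<ge> 0"
proof -
  have "\<bar>D (k-1) 1 - D (k-1) 0\<bar> \<le> L" using Lip[rule_format, of 1 0] by simp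
  then show ?thesis by (meson abs_ge_zero order_trans)
qed

lemma vhat_decay: "(\<Sum>j\<in>{-M..M}. real_of_int \<bar>j\<bar> ^ (2*k) * (cmod (vhat j))\<^sup>2) \<le> L\<^sup>2"
  unfolding vhat_def by (rule fourier_coeff_decay[OF k per D0 Dder Lip])

lemma vhat_uminus: "vhat (- j) = cnj (vhat j)"
proof -
  have "l2_inner (\<lambda>\<theta>. of_real (V \<theta>)) (cis_mode (- j)) = cnj (l2_inner (\<lambda>\<theta>. of_real (V \<theta>)) (cis_mode j))"
    unfolding l2_inner_def integral_cnj cis_mode_def by (simp add: cis_cnj)
  then show ?thesis unfolding vhat_def fourier_coeff_def by simp
qed

lemma vhat_0: "vhat 0 = complex_of_real V0"
proof -
  have "l2_inner (\<lambda>\<theta>. of_real (V \<theta>)) (cis_mode 0) = integral {-pi..pi} (\<lambda>\<theta>. complex_of_real (V \<theta>))"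
    unfolding l2_inner_def by simp
  also have "\<dots> = complex_of_real (integral {-pi..pi} V)"
    by (intro integral_unique has_integral_of_real integrable_integral integrable_continuous_interval cont_pi_V)
  finally show ?thesis unfolding vhat_def fourier_coeff_def V0_def by simp
qed

definition H_poly :: "nat \<Rightarrow> complex poly" where
  "H_poly n = (\<Sum>j\<in>{1..n}. monom (vhat (int j)) j)"

lemma coeff_H_poly: "coeff (H_poly n) i = (if 1 \<le> i \<and> i \<le> n then vhat (int i) else 0)"
  unfolding H_poly_def by (simp add: coeff_sum coeff_monom)

lemma coeff_H_poly_0: "coeff (H_poly n) 0 = 0"
  by (simp add: coeff_H_poly)

lemma poly_H_poly_0: "poly (H_poly n) 0 = 0"
  using coeff_H_poly_0 by (simp add: poly_0_coeff_0)

lemma degree_H_poly_le: "degree (H_poly n) \<le> n"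
  by (rule degree_le) (auto simp: coeff_H_poly)

lemma trig_poly_vhat_split: "trig_poly {-int n..int n} vhat \<theta> = complex_of_real V0 + poly (H_poly n) (cis \<theta>) + cnj (poly (H_poly n) (cis \<theta>))"
proof (induction n)
  case 0
  then show ?case by (simp add: trig_poly_def H_poly_def vhat_0)
next
  case (Suc n)
  have set: "{-int (Suc n)..int (Suc n)} = insert (int (Suc n)) (insert (- int (Suc n)) {-int n..int n})"
    by auto
  have "trig_poly {-int (Suc n)..int (Suc n)} vhat \<theta> = vhat (int (Suc n)) * cis_mode (int (Suc n)) \<theta> + (vhat (- int (Suc n)) * cis_mode (- int (Suc n)) \<theta> + trig_poly {-int n..int n} vhat \<theta>)"
    unfolding trig_poly_def set by simp
  also have "vhat (- int (Suc n)) * cis_mode (- int (Suc n)) \<theta> = cnj (vhat (int (Suc n)) * cis_mode (int (Suc n)) \<theta>)"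
  proof -
    have a: "vhat (- int (Suc n)) = cnj (vhat (int (Suc n)))" by (rule vhat_uminus)
    have b: "cis_mode (- int (Suc n)) \<theta> = cnj (cis_mode (int (Suc n)) \<theta>)"
      unfolding cis_mode_def cis_cnj by (simp add: algebra_simps)
    show ?thesis unfolding a b by simp
  qed
  also have "vhat (int (Suc n)) * cis_mode (int (Suc n)) \<theta> = poly (monom (vhat (int (Suc n))) (Suc n)) (cis \<theta>)"
    unfolding poly_monom cis_mode_def Complex.DeMoivre by simp
  also have "H_poly (Suc n) = H_poly n + monom (vhat (int (Suc n))) (Suc n)"
    unfolding H_poly_def by simp
  ultimately show ?case using Suc by (simp add: algebra_simps)
qed

definition V_partial :: "nat \<Rightarrow> real \<Rightarrow> real" where
  "V_partial n \<theta> = V0 + 2 * Re (poly (H_poly n) (cis \<theta>))"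

definition V_remainder :: "nat \<Rightarrow> real \<Rightarrow> real" where
  "V_remainder n \<theta> = V \<theta> - V_partial n \<theta>"

lemma trig_poly_vhat_eq_V_partial: "trig_poly {-int n..int n} vhat \<theta> = complex_of_real (V_partial n \<theta>)"
  unfolding trig_poly_vhat_split V_partial_def by (simp add: complex_eq_iff)

lemma continuous_on_V_partial: "continuous_on S (V_partial n)"
  unfolding V_partial_def by (intro continuous_intros)

lemma continuous_on_V_remainder: "continuous_on {-pi..pi} (V_remainder n)"
  unfolding V_remainder_def by (intro continuous_intros cont_pi_V continuous_on_V_partial)

lemma integral_V_remainder_sq_le: "integral {-pi..pi} (\<lambda>\<theta>. (V_remainder n \<theta>)\<^sup>2) \<le> 2 * pi * L\<^sup>2 / (real n + 1) ^ (2*k)"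
proof -
  have "l2_sq (\<lambda>\<theta>. complex_of_real (V \<theta>) - trig_poly {-int n..int n} (fourier_coeff (\<lambda>\<theta>. complex_of_real (V \<theta>))) \<theta>)
      \<le> 2 * pi * L\<^sup>2 / (of_int (int n) + 1) ^ (2*k)"
    using vhat_decay unfolding vhat_def by (intro fourier_remainder_l2_le[OF continuous_V per]) auto
  moreover have "l2_sq (\<lambda>\<theta>. complex_of_real (V \<theta>) - trig_poly {-int n..int n} (fourier_coeff (\<lambda>\<theta>. complex_of_real (V \<theta>))) \<theta>)
      = integral {-pi..pi} (\<lambda>\<theta>. (V_remainder n \<theta>)\<^sup>2)"
  proof -
    have e: "(\<lambda>\<theta>. complex_of_real (V \<theta>) - trig_poly {-int n..int n} (fourier_coeff (\<lambda>\<theta>. complex_of_real (V \<theta>))) \<theta>)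
        = (\<lambda>\<theta>. complex_of_real (V_remainder n \<theta>))"
      using trig_poly_vhat_eq_V_partial unfolding vhat_def V_remainder_def by (intro ext) simp
    show ?thesis unfolding e
      by (subst l2_sq_eq_integral) (auto intro!: continuous_intros continuous_on_V_remainder)
  qed
  ultimately show ?thesis by simp
qed

lemma integral_V_partial: "integral {-pi..pi} (V_partial n) = 2 * pi * V0"
proof -
  have mv: "integral {-pi..pi} (\<lambda>\<theta>. poly (H_poly n) (cis \<theta>)) = 0"
    using integral_entire_cis[of "poly (H_poly n)"] poly_H_poly_0 by (simp add: holomorphic_intros)
  have iH: "(\<lambda>\<theta>. poly (H_poly n) (cis \<theta>)) integrable_on {-pi..pi}"
    by (intro integrable_continuous_interval continuous_intros)
  have "integral {-pi..pi} (\<lambda>\<theta>. Re (poly (H_poly n) (cis \<theta>))) = Re (integral {-pi..pi} (\<lambda>\<theta>. poly (H_poly n) (cis \<theta>)))"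
    using integral_linear[OF iH bounded_linear_Re] by (simp add: o_def)
  then have "integral {-pi..pi} (\<lambda>\<theta>. Re (poly (H_poly n) (cis \<theta>))) = 0" using mv by simp
  moreover have "integral {-pi..pi} (V_partial n) = integral {-pi..pi} (\<lambda>\<theta>. V0) + 2 * integral {-pi..pi} (\<lambda>\<theta>. Re (poly (H_poly n) (cis \<theta>)))"
    unfolding V_partial_def
    by (subst integral_add) (auto intro!: integrable_continuous_interval continuous_intros)
  ultimately show ?thesis by simp
qed

lemma integral_V_remainder: "integral {-pi..pi} (V_remainder n) = 0"
proof -
  have "integral {-pi..pi} (V_remainder n) = integral {-pi..pi} V - integral {-pi..pi} (V_partial n)"
    unfolding V_remainder_def by (rule integral_diff) (auto intro!: integrable_continuous_interval cont_pi_V continuous_on_V_partial)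
  then show ?thesis using integral_V_partial unfolding V0_def by simp
qed

lemma vhat_decay_nat: "(\<Sum>i\<in>{1..n}. real i ^ (2*k) * (cmod (vhat (int i)))\<^sup>2) \<le> L\<^sup>2"
proof -
  have "(\<Sum>i\<in>{1..n}. real i ^ (2*k) * (cmod (vhat (int i)))\<^sup>2)
      = (\<Sum>j\<in>int ` {1..n}. real_of_int \<bar>j\<bar> ^ (2*k) * (cmod (vhat j))\<^sup>2)"
    by (subst sum.reindex) (auto simp: inj_on_def)
  also have "\<dots> \<le> (\<Sum>j\<in>{-int n..int n}. real_of_int \<bar>j\<bar> ^ (2*k) * (cmod (vhat j))\<^sup>2)"
    by (intro sum_mono2) auto
  also have "\<dots> \<le> L\<^sup>2" by (rule vhat_decay)
  finally show ?thesis .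
qed

lemma sum_inverse_squares_le_2: "(\<Sum>j\<in>{1..n}. 1 / (real j)\<^sup>2) \<le> 2"
proof -
  have "(\<Sum>j\<in>{1..n}. 1 / (real j)\<^sup>2) = (\<Sum>i<n. 1 / (1 + real i)\<^sup>2)"
    using sum.atLeast1_atMost_eq[of "\<lambda>j. 1 / (real j)\<^sup>2" n] by (simp add: add.commute)
  also have "\<dots> \<le> (\<Sum>i\<le>n. 1 / (1 + real i)\<^sup>2)" by (intro sum_mono2) auto
  also have "\<dots> \<le> 2 - 1 / (1 + real n)" by (rule sum_inverse_squares_le)
  also have "\<dots> \<le> 2" by simp
  finally show ?thesis .
qed

definition R0 :: real where "R0 = sqrt 2 * L"

lemma sum_norm_vhat_le: "(\<Sum>j\<in>{1..n}. cmod (vhat (int j))) \<le> R0"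
proof -
  have "(\<Sum>j\<in>{1..n}. cmod (vhat (int j))) = (\<Sum>j\<in>{1..n}. \<bar>1 / real j\<bar> * \<bar>real j * cmod (vhat (int j))\<bar>)"
    by (intro sum.cong refl) auto
  also have "\<dots> \<le> L2_set (\<lambda>j. 1 / real j) {1..n} * L2_set (\<lambda>j. real j * cmod (vhat (int j))) {1..n}"
    by (rule L2_set_mult_ineq)
  finally have h1: "(\<Sum>j\<in>{1..n}. cmod (vhat (int j))) \<le> L2_set (\<lambda>j. 1 / real j) {1..n} * L2_set (\<lambda>j. real j * cmod (vhat (int j))) {1..n}" .
  have h2: "L2_set (\<lambda>j. 1 / real j) {1..n} \<le> sqrt 2"
    unfolding L2_set_def using sum_inverse_squares_le_2[of n] by (simp add: power_divide)
  have h3: "L2_set (\<lambda>j. real j * cmod (vhat (int j))) {1..n} \<le> L"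
  proof -
    have "(\<Sum>j\<in>{1..n}. (real j * cmod (vhat (int j)))\<^sup>2) \<le> (\<Sum>i\<in>{1..n}. real i ^ (2*k) * (cmod (vhat (int i)))\<^sup>2)"
    proof (rule sum_mono)
      fix j assume j: "j \<in> {1..n}"
      have "(real j)\<^sup>2 \<le> real j ^ (2*k)" using j k by (intro power_increasing) auto
      then show "(real j * cmod (vhat (int j)))\<^sup>2 \<le> real j ^ (2*k) * (cmod (vhat (int j)))\<^sup>2"
        by (simp add: power_mult_distrib mult_right_mono)
    qed
    also have "\<dots> \<le> L\<^sup>2" by (rule vhat_decay_nat)
    finally have "sqrt (\<Sum>j\<in>{1..n}. (real j * cmod (vhat (int j)))\<^sup>2) \<le> sqrt (L\<^sup>2)"
      by (rule real_sqrt_le_mono)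
    then show ?thesis unfolding L2_set_def using lipschitz_const_nonneg by simp
  qed
  have "L2_set (\<lambda>j. 1 / real j) {1..n} * L2_set (\<lambda>j. real j * cmod (vhat (int j))) {1..n} \<le> sqrt 2 * L"
    using h2 h3 by (intro mult_mono) auto
  then show ?thesis using h1 unfolding R0_def by linarith
qed

lemma norm_H_poly_cis_le: "cmod (poly (H_poly n) (cis \<theta>)) \<le> R0"
proof -
  have "poly (H_poly n) (cis \<theta>) = (\<Sum>j\<in>{1..n}. vhat (int j) * cis \<theta> ^ j)"
    unfolding H_poly_def by (simp add: poly_sum poly_monom)
  then have "cmod (poly (H_poly n) (cis \<theta>)) \<le> (\<Sum>j\<in>{1..n}. cmod (vhat (int j) * cis \<theta> ^ j))"
    by (simp add: norm_sum)
  also have "\<dots> = (\<Sum>j\<in>{1..n}. cmod (vhat (int j)))" by (simp add: norm_mult norm_power)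
  also have "\<dots> \<le> R0" by (rule sum_norm_vhat_le)
  finally show ?thesis .
qed

definition MV :: real where "MV = (SUP \<theta>\<in>{-pi..pi}. \<bar>V \<theta>\<bar>)"

lemma abs_V_le_MV: "\<theta> \<in> {-pi..pi} \<Longrightarrow> \<bar>V \<theta>\<bar> \<le> MV"
proof -
  assume th: "\<theta> \<in> {-pi..pi}"
  have "compact ((\<lambda>\<theta>. \<bar>V \<theta>\<bar>) ` {-pi..pi})"
    by (intro compact_continuous_image continuous_intros cont_pi_V) auto
  then have "bdd_above ((\<lambda>\<theta>. \<bar>V \<theta>\<bar>) ` {-pi..pi})"
    by (intro bounded_imp_bdd_above compact_imp_bounded)
  then show ?thesis unfolding MV_def using th by (intro cSUP_upper)
qed

definition M0 :: real where "M0 = MV + \<bar>V0\<bar> + 2 * R0"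

lemma abs_V_partial_le: "\<bar>V_partial n \<theta>\<bar> \<le> \<bar>V0\<bar> + 2 * R0"
proof -
  have "\<bar>Re (poly (H_poly n) (cis \<theta>))\<bar> \<le> R0"
    using norm_H_poly_cis_le[of n \<theta>] abs_Re_le_cmod order_trans by blast
  then show ?thesis unfolding V_partial_def by linarith
qed

lemma abs_V_remainder_le: "\<theta> \<in> {-pi..pi} \<Longrightarrow> \<bar>V_remainder n \<theta>\<bar> \<le> M0"
  using abs_V_le_MV[of \<theta>] abs_V_partial_le[of n \<theta>] unfolding V_remainder_def M0_def by linarith

lemma wnorm_H_poly_le: "wnorm k (H_poly n) \<le> 2 ^ k * L"
proof -
  have "wnorm k (H_poly n) = wnorm_upto k n (H_poly n)" using wnorm_upto_eq[OF degree_H_poly_le] by simp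
  also have "\<dots> = sqrt (\<Sum>i\<le>n. ((1 + real i) ^ k * cmod (coeff (H_poly n) i))\<^sup>2)"
    unfolding wnorm_upto_def L2_set_def ..
  also have "(\<Sum>i\<le>n. ((1 + real i) ^ k * cmod (coeff (H_poly n) i))\<^sup>2)
      = (\<Sum>i\<in>{1..n}. ((1 + real i) ^ k * cmod (vhat (int i)))\<^sup>2)"
    by (rule sum.mono_neutral_cong_right) (auto simp: coeff_H_poly)
  also have "\<dots> \<le> (\<Sum>i\<in>{1..n}. 4 ^ k * (real i ^ (2*k) * (cmod (vhat (int i)))\<^sup>2))"
  proof (rule sum_mono)
    fix i assume i: "i \<in> {1..n}"
    have "(1 + real i) ^ (2*k) \<le> (2 * real i) ^ (2*k)" using i by (intro power_mono) auto
    also have "\<dots> = 4 ^ k * real i ^ (2*k)" by (simp add: power_mult_distrib power_mult)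
    finally have "(1 + real i) ^ (2*k) * (cmod (vhat (int i)))\<^sup>2 \<le> 4 ^ k * real i ^ (2*k) * (cmod (vhat (int i)))\<^sup>2"
      by (intro mult_right_mono) auto
    then show "((1 + real i) ^ k * cmod (vhat (int i)))\<^sup>2 \<le> 4 ^ k * (real i ^ (2*k) * (cmod (vhat (int i)))\<^sup>2)"
      by (simp add: power_mult_distrib power_mult[symmetric] mult.commute[of k] mult.assoc)
  qed
  also have "\<dots> = 4 ^ k * (\<Sum>i\<in>{1..n}. real i ^ (2*k) * (cmod (vhat (int i)))\<^sup>2)"
    by (simp add: sum_distrib_left)
  also have "\<dots> \<le> 4 ^ k * L\<^sup>2" using vhat_decay_nat by (intro mult_left_mono) auto
  finally have "wnorm k (H_poly n) \<le> sqrt (4 ^ k * L\<^sup>2)" by (simp add: real_sqrt_le_mono)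
  also have "sqrt (4 ^ k * L\<^sup>2) = 2 ^ k * L"
    using lipschitz_const_nonneg by (simp add: real_sqrt_mult power_mult[symmetric] real_sqrt_power
       flip: power_mult_distrib)
  finally show ?thesis .
qed

lemma continuous_weight: "continuous_on {-pi..pi} (\<lambda>\<theta>. exp (- V \<theta>))"
  by (intro continuous_intros cont_pi_V)

lemma V_split: "V \<theta> = V0 + 2 * Re (poly (H_poly n) (cis \<theta>)) + V_remainder n \<theta>"
  unfolding V_remainder_def V_partial_def by simp

lemma integral_poly_exp_neg_H_poly:
  assumes "coeff q 0 = 1"
  shows "integral {-pi..pi} (\<lambda>\<theta>. poly q (cis \<theta>) * exp (- poly (H_poly n) (cis \<theta>))) = 2 * pi"
proof -
  have "(\<lambda>z. poly q z * exp (- poly (H_poly n) z)) holomorphic_on UNIV"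
    by (intro holomorphic_intros)
  then show ?thesis
    using integral_entire_cis[of "\<lambda>z. poly q z * exp (- poly (H_poly n) z)"] assms poly_H_poly_0[of n]
    by (simp add: poly_0_coeff_0)
qed

subsection \<open>Upper bound for the leading coefficient\<close>

lemma norm_exp_neg_H_poly_le:
  assumes "\<kappa> > 0"
  shows "cmod w * exp (- Re (poly (H_poly n) (cis \<theta>)))
           \<le> (\<kappa>\<^sup>2 * (cmod w)\<^sup>2 * exp (- V \<theta>) + exp V0 / \<kappa>\<^sup>2 * exp (V_remainder n \<theta>)) / 2"
proof -
  define a where "a = cmod w * exp (- V \<theta> / 2)"
  define b where "b = exp ((V_remainder n \<theta> + V0) / 2)"
  have "cmod w * exp (- Re (poly (H_poly n) (cis \<theta>))) = a * b"
    unfolding a_def b_def using V_split[of \<theta> n] by (simp add: mult.assoc exp_add[symmetric] field_simps)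
  also have "\<dots> \<le> (\<kappa>\<^sup>2 * a\<^sup>2 + b\<^sup>2 / \<kappa>\<^sup>2) / 2"
    using zero_le_power2[of "\<kappa> * a - b / \<kappa>"] assms by (simp add: power2_eq_square field_simps)
  also have "\<kappa>\<^sup>2 * a\<^sup>2 = \<kappa>\<^sup>2 * (cmod w)\<^sup>2 * exp (- V \<theta>)"
    unfolding a_def by (simp add: power_mult_distrib power2_eq_square exp_add[symmetric])
  also have "b\<^sup>2 = exp V0 * exp (V_remainder n \<theta>)"
    unfolding b_def by (simp add: power2_eq_square exp_add[symmetric] field_simps)
  finally show ?thesis by (simp add: field_simps)
qed

lemma integral_exp_V_remainder_le:
  "integral {-pi..pi} (\<lambda>\<theta>. exp (V_remainder n \<theta>)) \<le> 2 * pi * (1 + exp M0 * L\<^sup>2 / (real n + 1) ^ (2*k))"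
proof -
  have cu: "continuous_on {-pi..pi} (V_remainder n)" by (rule continuous_on_V_remainder)
  have "integral {-pi..pi} (\<lambda>\<theta>. exp (V_remainder n \<theta>))
      \<le> integral {-pi..pi} (\<lambda>\<theta>. 1 + V_remainder n \<theta> + exp M0 * (V_remainder n \<theta>)\<^sup>2)"
    by (rule integral_le)
      (auto intro!: integrable_continuous_interval continuous_intros cu exp_le_quadratic abs_V_remainder_le)
  also have "\<dots> = 2 * pi + integral {-pi..pi} (V_remainder n) + exp M0 * integral {-pi..pi} (\<lambda>\<theta>. (V_remainder n \<theta>)\<^sup>2)"
  proof -
    have "(\<lambda>\<theta>. 1 + V_remainder n \<theta>) integrable_on {-pi..pi}"
      and "(\<lambda>\<theta>. exp M0 * (V_remainder n \<theta>)\<^sup>2) integrable_on {-pi..pi}"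
      and "(\<lambda>\<theta>. 1::real) integrable_on {-pi..pi}" and "V_remainder n integrable_on {-pi..pi}"
      by (intro integrable_continuous_interval continuous_intros cu)+
    then show ?thesis by (simp add: integral_add)
  qed
  also have "\<dots> \<le> 2 * pi + exp M0 * (2 * pi * L\<^sup>2 / (real n + 1) ^ (2*k))"
    using mult_left_mono[OF integral_V_remainder_sq_le[of n], of "exp M0"] by (simp add: integral_V_remainder)
  finally show ?thesis by (simp add: algebra_simps)
qed

lemma lead_coeff_sq_upper:
  fixes p :: "complex poly"
  assumes dp: "degree p = n" and lp: "Im (lead_coeff p) = 0 \<and> Re (lead_coeff p) > 0"
    and normalized: "circ_inner (\<lambda>\<theta>. exp (- V \<theta>)) p p = 1"
  shows "(Re (lead_coeff p))\<^sup>2 * exp (- V0) \<le> 1 + exp M0 * L\<^sup>2 / (real n + 1) ^ (2*k)"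
proof -
  define \<kappa> where "\<kappa> = Re (lead_coeff p)"
  define X where "X = 1 + exp M0 * L\<^sup>2 / (real n + 1) ^ (2*k)"
  have \<kappa>: "\<kappa> > 0" "lead_coeff p = complex_of_real \<kappa>"
    unfolding \<kappa>_def using lp by (auto simp: complex_eq_iff)
  define q where "q = rev_cnj_poly n (smult (complex_of_real (1/\<kappa>)) p)"
  have q0: "coeff q 0 = 1" unfolding q_def using \<kappa> dp by (simp add: coeff_rev_cnj_poly)
  have norm_q: "\<kappa>\<^sup>2 * (cmod (poly q (cis \<theta>)))\<^sup>2 = (cmod (poly p (cis \<theta>)))\<^sup>2" for \<theta>
    unfolding q_def using \<kappa> dp
    by (subst norm_poly_rev_cnj_poly_cis) (auto simp: norm_mult norm_divide power_divide)
  have "circ_norm_sq (\<lambda>\<theta>. exp (- V \<theta>)) p = 1"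
    using circ_inner_self[OF continuous_weight, of p] normalized by simp
  then have int_p: "integral {-pi..pi} (\<lambda>\<theta>. (cmod (poly p (cis \<theta>)))\<^sup>2 * exp (- V \<theta>)) = 2 * pi"
    unfolding circ_norm_sq_def by (simp add: field_simps)
  define g where "g = (\<lambda>\<theta>. ((cmod (poly p (cis \<theta>)))\<^sup>2 * exp (- V \<theta>) + exp V0 / \<kappa>\<^sup>2 * exp (V_remainder n \<theta>)) / 2)"
  have int1: "(\<lambda>\<theta>. (cmod (poly p (cis \<theta>)))\<^sup>2 * exp (- V \<theta>)) integrable_on {-pi..pi}"
    and int2: "(\<lambda>\<theta>. exp V0 / \<kappa>\<^sup>2 * exp (V_remainder n \<theta>)) integrable_on {-pi..pi}"
    by (intro integrable_continuous_interval continuous_intros cont_pi_V continuous_on_V_remainder)+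
  have "2 * pi = cmod (integral {-pi..pi} (\<lambda>\<theta>. poly q (cis \<theta>) * exp (- poly (H_poly n) (cis \<theta>))))"
    using integral_poly_exp_neg_H_poly[OF q0] by simp
  also have "\<dots> \<le> integral {-pi..pi} g"
  proof (rule integral_norm_bound_integral)
    fix \<theta> show "cmod (poly q (cis \<theta>) * exp (- poly (H_poly n) (cis \<theta>))) \<le> g \<theta>"
      using norm_exp_neg_H_poly_le[OF \<kappa>(1), of "poly q (cis \<theta>)" n \<theta>]
      unfolding g_def norm_q by (simp add: norm_mult)
  qed (use \<kappa>(1) in \<open>auto simp: g_def intro!: integrable_continuous_interval continuous_intros
         cont_pi_V continuous_on_V_remainder\<close>)
  also have "integral {-pi..pi} g
      = (2 * pi + exp V0 / \<kappa>\<^sup>2 * integral {-pi..pi} (\<lambda>\<theta>. exp (V_remainder n \<theta>))) / 2"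
    unfolding g_def Henstock_Kurzweil_Integration.integral_divide integral_add[OF int1 int2] int_p
    by simp
  also have "\<dots> \<le> (2 * pi + exp V0 / \<kappa>\<^sup>2 * (2 * pi * X)) / 2"
    unfolding X_def using integral_exp_V_remainder_le[of n] by (intro divide_right_mono add_left_mono mult_left_mono) auto
  finally have "\<kappa>\<^sup>2 \<le> exp V0 * X"
    using \<kappa>(1) by (simp add: field_simps)
  then show ?thesis unfolding \<kappa>_def X_def by (simp add: exp_minus field_simps)
qed

subsection \<open>Lower bound for the leading coefficient\<close>

definition K1 :: real where "K1 = 2 + M0 + exp M0 + exp M0 * M0 + exp M0 * M0\<^sup>2"
definition B1 :: real where "B1 = exp (2 ^ (k+2) * (2 ^ k * L))"
definition K2 :: real where "K2 = K1 * (exp (2 * R0) * 2 * (B1\<^sup>2 + 1) + L\<^sup>2)"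

lemma K1_nonneg: "K1 \<ge> 0"
proof -
  have "M0 \<ge> 0" using abs_V_remainder_le[of 0 0] by simp
  then show ?thesis unfolding K1_def by (intro add_nonneg_nonneg mult_nonneg_nonneg) auto
qed

lemma K2_nonneg: "K2 \<ge> 0"
  unfolding K2_def using K1_nonneg by (intro mult_nonneg_nonneg add_nonneg_nonneg) auto

lemma wnorm_exp_trunc_H_poly_le: "wnorm k (exp_trunc_poly M (H_poly n)) \<le> B1"
proof -
  have "wnorm k (exp_trunc_poly M (H_poly n)) \<le> exp (2 ^ (k+2) * wnorm k (H_poly n))"
    by (rule wnorm_exp_trunc_poly_le[OF k])
  also have "\<dots> \<le> B1" unfolding B1_def using wnorm_H_poly_le[of n] by simp
  finally show ?thesis .
qed

lemma norm_poly_exp_neg_H_poly_minus_1_le: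
  "cmod (poly q (cis \<theta>) * exp (- poly (H_poly n) (cis \<theta>)) - 1)
     \<le> exp R0 * (cmod (poly (q - exp_trunc_poly M (H_poly n)) (cis \<theta>))
                   + (exp R0 - (\<Sum>l\<le>M. R0 ^ l /\<^sub>R fact l)))"
proof -
  define h where "h = poly (H_poly n) (cis \<theta>)"
  have h: "cmod h \<le> R0" unfolding h_def by (rule norm_H_poly_cis_le)
  have "cmod (exp (- h)) \<le> exp R0"
    using h abs_Re_le_cmod[of h] by simp
  moreover have "cmod (poly q (cis \<theta>) - exp h)
      \<le> cmod (poly (q - exp_trunc_poly M (H_poly n)) (cis \<theta>)) + (exp R0 - (\<Sum>l\<le>M. R0 ^ l /\<^sub>R fact l))"
  proof -
    have "cmod (poly (exp_trunc_poly M (H_poly n)) (cis \<theta>) - exp h) \<le> exp R0 - (\<Sum>l\<le>M. R0 ^ l /\<^sub>R fact l)"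
      using norm_exp_remainder_le[OF h, of M] unfolding h_def poly_exp_trunc_poly
      by (simp add: norm_minus_commute)
    then show ?thesis
      using norm_triangle_ineq[of "poly (q - exp_trunc_poly M (H_poly n)) (cis \<theta>)"
          "poly (exp_trunc_poly M (H_poly n)) (cis \<theta>) - exp h"] by simp
  qed
  moreover have "poly q (cis \<theta>) * exp (- h) - 1 = (poly q (cis \<theta>) - exp h) * exp (- h)"
    by (simp add: algebra_simps exp_minus_inverse)
  ultimately show ?thesis unfolding h_def
    by (simp add: norm_mult mult.commute mult_mono)
qed

lemma exists_poly_approx_exp_H_poly:
  "\<exists>q. degree q \<le> n \<and> coeff q 0 = 1 \<and>
     integral {-pi..pi} (\<lambda>\<theta>. (cmod (poly q (cis \<theta>) * exp (- poly (H_poly n) (cis \<theta>)) - 1))\<^sup>2)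
       \<le> exp (2 * R0) * 2 * (B1\<^sup>2 + 1) * (2 * pi / (real n + 1) ^ (2*k))"
proof -
  define \<epsilon> where "\<epsilon> = 1 / (real n + 1) ^ k"
  have \<epsilon>: "\<epsilon> > 0" "\<epsilon>\<^sup>2 = 1 / (real n + 1) ^ (2*k)"
    unfolding \<epsilon>_def by (simp_all add: power_divide power_mult[symmetric] mult.commute)
  obtain M where M: "exp R0 - (\<Sum>l\<le>M. R0 ^ l /\<^sub>R fact l) < \<epsilon>"
    using order_tendstoD(2)[OF exp_remainder_tendsto_0 \<epsilon>(1)] unfolding eventually_sequentially by blast
  define P where "P = exp_trunc_poly M (H_poly n)"
  define q where "q = poly_cutoff (Suc n) P"
  have dq: "degree q \<le> n" unfolding q_def by (rule degree_le) (auto simp: coeff_poly_cutoff)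
  have q0: "coeff q 0 = 1"
    unfolding q_def P_def by (simp add: coeff_poly_cutoff coeff_0_exp_trunc_poly coeff_H_poly_0)
  define d where "d = (\<lambda>\<theta>. cmod (poly (q - P) (cis \<theta>)))"
  have "(cmod (poly q (cis \<theta>) * exp (- poly (H_poly n) (cis \<theta>)) - 1))\<^sup>2
      \<le> exp (2 * R0) * 2 * ((d \<theta>)\<^sup>2 + \<epsilon>\<^sup>2)" for \<theta>
  proof -
    have "(cmod (poly q (cis \<theta>) * exp (- poly (H_poly n) (cis \<theta>)) - 1))\<^sup>2 \<le> (exp R0 * (d \<theta> + \<epsilon>))\<^sup>2"
      using norm_poly_exp_neg_H_poly_minus_1_le[of q \<theta> n M] M unfolding d_def P_def
      by (intro power_mono) (auto intro: order_trans)
    also have "\<dots> = exp (2 * R0) * (d \<theta> + \<epsilon>)\<^sup>2"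
      by (simp add: power_mult_distrib power2_eq_square exp_add[symmetric])
    also have "(d \<theta> + \<epsilon>)\<^sup>2 \<le> 2 * ((d \<theta>)\<^sup>2 + \<epsilon>\<^sup>2)"
      using zero_le_power2[of "d \<theta> - \<epsilon>"] by (simp add: power2_eq_square algebra_simps)
    finally show ?thesis by (simp add: mult.assoc)
  qed
  moreover have tail: "integral {-pi..pi} (\<lambda>\<theta>. (d \<theta>)\<^sup>2) \<le> 2 * pi * B1\<^sup>2 / (real n + 1) ^ (2*k)"
  proof -
    have "integral {-pi..pi} (\<lambda>\<theta>. (d \<theta>)\<^sup>2) \<le> 2 * pi * (wnorm k P)\<^sup>2 / (real n + 1) ^ (2*k)"
      unfolding d_def q_def using l2_sq_poly_minus_cutoff_le[of P n k]
      by (simp add: norm_minus_commute)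
    also have "\<dots> \<le> 2 * pi * B1\<^sup>2 / (real n + 1) ^ (2*k)"
      using wnorm_exp_trunc_H_poly_le[of M n] wnorm_nonneg[of k P] unfolding P_def
      by (intro divide_right_mono mult_left_mono power_mono) auto
    finally show ?thesis .
  qed
  ultimately have "integral {-pi..pi} (\<lambda>\<theta>. (cmod (poly q (cis \<theta>) * exp (- poly (H_poly n) (cis \<theta>)) - 1))\<^sup>2)
      \<le> integral {-pi..pi} (\<lambda>\<theta>. exp (2 * R0) * 2 * ((d \<theta>)\<^sup>2 + \<epsilon>\<^sup>2))"
    unfolding d_def by (intro integral_le integrable_continuous_interval continuous_intros) auto
  also have "\<dots> = exp (2 * R0) * 2 * (integral {-pi..pi} (\<lambda>\<theta>. (d \<theta>)\<^sup>2) + 2 * pi * \<epsilon>\<^sup>2)"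
  proof -
    have "(\<lambda>\<theta>. (d \<theta>)\<^sup>2) integrable_on {-pi..pi}" and "(\<lambda>\<theta>. \<epsilon>\<^sup>2) integrable_on {-pi..pi}"
      unfolding d_def by (intro integrable_continuous_interval continuous_intros)+
    then show ?thesis by (simp add: integral_add)
  qed
  also have "\<dots> \<le> exp (2 * R0) * 2 * (2 * pi * B1\<^sup>2 / (real n + 1) ^ (2*k) + 2 * pi * \<epsilon>\<^sup>2)"
    using tail by (intro mult_left_mono add_right_mono) auto
  finally show ?thesis using dq q0 \<epsilon>(2) by (auto simp: algebra_simps)
qed

lemma norm_poly_sq_weight_le:
  fixes q :: "complex poly" and n :: nat
  assumes \<theta>: "\<theta> \<in> {-pi..pi}"
  defines "s \<equiv> poly q (cis \<theta>) * exp (- poly (H_poly n) (cis \<theta>)) - 1"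
  shows "(cmod (poly q (cis \<theta>)))\<^sup>2 * exp (- V \<theta>)
           \<le> exp (- V0) * (1 + 2 * Re s - V_remainder n \<theta> + K1 * ((cmod s)\<^sup>2 + (V_remainder n \<theta>)\<^sup>2))"
proof -
  define h where "h = poly (H_poly n) (cis \<theta>)"
  have norm_1s: "(cmod (1 + s))\<^sup>2 = 1 + 2 * Re s + (cmod s)\<^sup>2"
    by (simp only: cmod_power2) (simp add: power2_eq_square algebra_simps)
  have weight: "exp (2 * Re h) * exp (- V \<theta>) = exp (- V0) * exp (- V_remainder n \<theta>)"
    unfolding h_def by (subst V_split[of \<theta> n]) (simp add: exp_add[symmetric])
  have "poly q (cis \<theta>) = (1 + s) * exp h"
    unfolding s_def h_def by (simp add: algebra_simps exp_minus_inverse)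
  then have "(cmod (poly q (cis \<theta>)))\<^sup>2 * exp (- V \<theta>) = (cmod (1 + s))\<^sup>2 * (exp (2 * Re h) * exp (- V \<theta>))"
    by (simp add: norm_mult power_mult_distrib power2_eq_square exp_add[symmetric])
  also have "\<dots> = exp (- V0) * ((1 + 2 * Re s + (cmod s)\<^sup>2) * exp (- V_remainder n \<theta>))"
    unfolding norm_1s weight by (simp add: mult_ac)
  also have "\<dots> \<le> exp (- V0) * (1 + 2 * Re s - V_remainder n \<theta> + K1 * ((cmod s)\<^sup>2 + (V_remainder n \<theta>)\<^sup>2))"
    unfolding K1_def
  proof (intro mult_left_mono exp_neg_product_le_quadratic abs_V_remainder_le[OF \<theta>])
    show "(Re s)\<^sup>2 \<le> (cmod s)\<^sup>2"
      using abs_Re_le_cmod[of s] by (metis abs_ge_zero power2_abs power_mono)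
    show "0 \<le> 1 + 2 * Re s + (cmod s)\<^sup>2" using norm_1s zero_le_power2[of "cmod (1 + s)"] by linarith
  qed simp
  finally show ?thesis .
qed

lemma exists_near_extremal_poly:
  "\<exists>q. degree q \<le> n \<and> coeff q 0 = 1 \<and>
     integral {-pi..pi} (\<lambda>\<theta>. (cmod (poly q (cis \<theta>)))\<^sup>2 * exp (- V \<theta>))
       \<le> 2 * pi * exp (- V0) * (1 + K2 / (real n + 1) ^ (2*k))"
proof -
  obtain q where dq: "degree q \<le> n" and q0: "coeff q 0 = 1" and
    approx: "integral {-pi..pi} (\<lambda>\<theta>. (cmod (poly q (cis \<theta>) * exp (- poly (H_poly n) (cis \<theta>)) - 1))\<^sup>2)
       \<le> exp (2 * R0) * 2 * (B1\<^sup>2 + 1) * (2 * pi / (real n + 1) ^ (2*k))"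
    using exists_poly_approx_exp_H_poly[of n] by blast
  define s where "s = (\<lambda>\<theta>. poly q (cis \<theta>) * exp (- poly (H_poly n) (cis \<theta>)) - 1)"
  define u where "u = V_remainder n"
  have approx_s: "integral {-pi..pi} (\<lambda>\<theta>. (cmod (s \<theta>))\<^sup>2)
       \<le> exp (2 * R0) * 2 * (B1\<^sup>2 + 1) * (2 * pi / (real n + 1) ^ (2*k))"
    using approx unfolding s_def .
  have cs: "continuous_on {-pi..pi} s" unfolding s_def by (intro continuous_intros)
  have cu: "continuous_on {-pi..pi} u" unfolding u_def by (rule continuous_on_V_remainder)
  have "integral {-pi..pi} s = 0"
    unfolding s_def using integral_poly_exp_neg_H_poly[OF q0, of n]
    by (subst integral_diff) (auto intro!: integrable_continuous_interval continuous_intros simp: scaleR_conv_of_real)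
  then have int_Re_s: "integral {-pi..pi} (\<lambda>\<theta>. Re (s \<theta>)) = 0"
    using integral_linear[OF integrable_continuous_interval[OF cs] bounded_linear_Re] by (simp add: o_def)
  have "integral {-pi..pi} (\<lambda>\<theta>. (cmod (poly q (cis \<theta>)))\<^sup>2 * exp (- V \<theta>))
      \<le> integral {-pi..pi} (\<lambda>\<theta>. exp (- V0) * (1 + 2 * Re (s \<theta>) - u \<theta> + K1 * ((cmod (s \<theta>))\<^sup>2 + (u \<theta>)\<^sup>2)))"
    unfolding s_def u_def
    by (intro integral_le integrable_continuous_interval continuous_intros cont_pi_V continuous_on_V_remainder
        norm_poly_sq_weight_le)
  also have "\<dots> = exp (- V0) * (2 * pi + 2 * integral {-pi..pi} (\<lambda>\<theta>. Re (s \<theta>)) - integral {-pi..pi} u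
        + K1 * (integral {-pi..pi} (\<lambda>\<theta>. (cmod (s \<theta>))\<^sup>2) + integral {-pi..pi} (\<lambda>\<theta>. (u \<theta>)\<^sup>2)))"
    by (rule integral_quadratic_expansion[OF cs cu])
  also have "\<dots> \<le> exp (- V0) * (2 * pi + K1 * (exp (2 * R0) * 2 * (B1\<^sup>2 + 1) * (2 * pi / (real n + 1) ^ (2*k))
        + 2 * pi * L\<^sup>2 / (real n + 1) ^ (2*k)))"
  proof -
    have "K1 * (integral {-pi..pi} (\<lambda>\<theta>. (cmod (s \<theta>))\<^sup>2) + integral {-pi..pi} (\<lambda>\<theta>. (u \<theta>)\<^sup>2))
        \<le> K1 * (exp (2 * R0) * 2 * (B1\<^sup>2 + 1) * (2 * pi / (real n + 1) ^ (2*k)) + 2 * pi * L\<^sup>2 / (real n + 1) ^ (2*k))"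
      using approx_s integral_V_remainder_sq_le[of n] K1_nonneg unfolding u_def
      by (intro mult_left_mono add_mono)
    then show ?thesis unfolding int_Re_s u_def integral_V_remainder by simp
  qed
  also have "\<dots> = 2 * pi * exp (- V0) * (1 + K2 / (real n + 1) ^ (2*k))"
    unfolding K2_def by (simp add: field_simps)
  finally show ?thesis using dq q0 by blast
qed

lemma lead_coeff_sq_lower:
  fixes p :: "nat \<Rightarrow> complex poly"
  assumes deg: "\<And>n. degree (p n) = n"
    and lead_pos: "\<And>n. Im (lead_coeff (p n)) = 0 \<and> Re (lead_coeff (p n)) > 0"
    and orth: "\<And>m n. circ_inner (\<lambda>\<theta>. exp (- V \<theta>)) (p m) (p n) = (if m = n then 1 else 0)"
  shows "1 - K2 / (real n + 1) ^ (2*k) \<le> (Re (lead_coeff (p n)))\<^sup>2 * exp (- V0)"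
proof -
  obtain q where q: "degree q \<le> n" "coeff q 0 = 1"
    "integral {-pi..pi} (\<lambda>\<theta>. (cmod (poly q (cis \<theta>)))\<^sup>2 * exp (- V \<theta>)) \<le> 2 * pi * exp (- V0) * (1 + K2 / (real n + 1) ^ (2*k))"
    using exists_near_extremal_poly[of n] by blast
  define \<kappa> where "\<kappa> = Re (lead_coeff (p n))"
  define x where "x = K2 / (real n + 1) ^ (2*k)"
  have \<kappa>: "\<kappa> > 0" unfolding \<kappa>_def using lead_pos by simp
  have "1 / \<kappa>\<^sup>2 \<le> circ_norm_sq (\<lambda>\<theta>. exp (- V \<theta>)) (rev_cnj_poly n q)"
    unfolding \<kappa>_def using rev_cnj_poly_monic[OF q(2)]
    by (intro inverse_lead_coeff_sq_le_circ_norm_sq[OF continuous_weight _ deg lead_pos orth]) auto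
  also have "\<dots> = (1 / (2 * pi)) * integral {-pi..pi} (\<lambda>\<theta>. (cmod (poly q (cis \<theta>)))\<^sup>2 * exp (- V \<theta>))"
    unfolding circ_norm_sq_def using norm_poly_rev_cnj_poly_cis[OF q(1)] by simp
  also have "\<dots> \<le> exp (- V0) * (1 + x)"
    using q(3) unfolding x_def by (simp add: field_simps)
  finally have "1 \<le> \<kappa>\<^sup>2 * exp (- V0) * (1 + x)"
    using \<kappa> by (simp add: field_simps)
  moreover have "x \<ge> 0" unfolding x_def using K2_nonneg by simp
  moreover have "(1 - x) * (1 + x) \<le> 1" by (simp add: algebra_simps)
  ultimately have "(1 - x) * (1 + x) \<le> \<kappa>\<^sup>2 * exp (- V0) * (1 + x)" by linarith
  then show ?thesis using \<open>x \<ge> 0\<close> unfolding x_def \<kappa>_def by (simp add: mult_le_cancel_right_pos)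
qed

lemma lead_coeff_sq_error_le:
  fixes p :: "nat \<Rightarrow> complex poly"
  assumes deg: "\<And>n. degree (p n) = n"
    and lead_pos: "\<And>n. Im (lead_coeff (p n)) = 0 \<and> Re (lead_coeff (p n)) > 0"
    and orth: "\<And>m n. circ_inner (\<lambda>\<theta>. exp (- V \<theta>)) (p m) (p n) = (if m = n then 1 else 0)"
  shows "\<bar>(Re (lead_coeff (p n)))\<^sup>2 * exp (- V0) - 1\<bar> \<le> max (exp M0 * L\<^sup>2) K2 / (real n + 1) ^ (2*k)"
proof -
  have "exp M0 * L\<^sup>2 / (real n + 1) ^ (2*k) \<le> max (exp M0 * L\<^sup>2) K2 / (real n + 1) ^ (2*k)"
    and "K2 / (real n + 1) ^ (2*k) \<le> max (exp M0 * L\<^sup>2) K2 / (real n + 1) ^ (2*k)"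
    by (simp_all add: divide_right_mono)
  then show ?thesis
    using lead_coeff_sq_upper[OF deg lead_pos[of n] orth[of n n, simplified]] lead_coeff_sq_lower[OF deg lead_pos orth, of n]
    by simp
qed

end

lemma C_lip_circle_imp_szego_potential:
  assumes "k \<ge> 1" "C_lip_circle k V"
  shows "\<exists>L D. szego_potential V k L D"
  using assms unfolding C_lip_circle_def szego_potential_def by blast

lemma inverse_power_le_ln_div_power:
  fixes K :: real
  assumes "K \<ge> 0" "n \<ge> 3"
  shows "K / (real n + 1) ^ m \<le> K * ln (real n) / real n ^ m"
proof -
  have "exp 1 \<le> real n" using exp_le assms(2) by linarith
  then have "1 \<le> ln (real n)" using assms(2) by (subst ln_ge_iff) auto
  have "K / (real n + 1) ^ m \<le> K / real n ^ m"
    using assms by (intro divide_left_mono power_mono mult_pos_pos) auto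
  also have "\<dots> \<le> K * ln (real n) / real n ^ m"
    using mult_left_mono[OF \<open>1 \<le> ln (real n)\<close> assms(1)] by (intro divide_right_mono) auto
  finally show ?thesis .
qed

theorem theorem3p7:
  fixes V :: "real \<Rightarrow> real" and k :: nat and p :: "nat \<Rightarrow> complex poly"
  assumes k: "k \<ge> 1"
    and V: "C_lip_circle k V"
    and deg: "\<And>n. degree (p n) = n"
    and lead_pos: "\<And>n. Im (lead_coeff (p n)) = 0 \<and> Re (lead_coeff (p n)) > 0"
    and orth: "\<And>m n. circ_inner (\<lambda>\<theta>. exp (- V \<theta>)) (p m) (p n) = (if m = n then 1 else 0)"
  shows "\<exists>K > 0. \<forall>\<^sub>F n in sequentially.
           \<bar>(Re (lead_coeff (p n)))\<^sup>2 * exp (- ((1 / (2 * pi)) * integral {-pi..pi} V)) - 1\<bar>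
             \<le> K * ln (real n) / real n ^ (2 * k)"
proof -
  obtain L D where "szego_potential V k L D"
    using C_lip_circle_imp_szego_potential[OF k V] by blast
  then interpret szego_potential V k L D .
  define K where "K = max (exp M0 * L\<^sup>2) K2 + 1"
  have "K > 0" unfolding K_def using K2_nonneg by (simp add: max_def)
  have "\<bar>(Re (lead_coeff (p n)))\<^sup>2 * exp (- V0) - 1\<bar> \<le> K * ln (real n) / real n ^ (2 * k)" if "n \<ge> 3" for n
  proof -
    have "\<bar>(Re (lead_coeff (p n)))\<^sup>2 * exp (- V0) - 1\<bar> \<le> K / (real n + 1) ^ (2*k)"
      using lead_coeff_sq_error_le[OF deg lead_pos orth, of n]
      by (rule order_trans) (simp add: K_def divide_right_mono)
    also have "\<dots> \<le> K * ln (real n) / real n ^ (2 * k)"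
      using \<open>K > 0\<close> that by (intro inverse_power_le_ln_div_power) auto
    finally show ?thesis .
  qed
  then show ?thesis using \<open>K > 0\<close> unfolding eventually_sequentially V0_def by blast
qed

end
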